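(* Fix an uncountable cardinal $\lambda$. If there is an adequate $\omega_1$-poset, then there are an adequate $\omega$-poset and an adequate $1$-poset.
   Context: For $s=\langle\alpha,\zeta\rangle$ write $\pi(s)=\alpha$, $\rho(s)=\zeta$. An LCS poset is a triple $\mathcal T=\langle T,\preceq,i\rangle$ such that: (1) $\langle T,\preceq\rangle$ is a partial order with $T=\bigcup\{T_\alpha:\alpha<\eta\}$ for a nonzero ordinal $\eta$, each $T_\alpha=\{\alpha\}\times A_\alpha$ with $A_\alpha$ a nonempty set of ordinals; (2) $s\prec t$ implies $\pi(s)<\pi(t)$; (3) if $\alpha<\beta<\eta$ and $t\in T_\beta$ then $\{s\in T_\alpha: s\prec t\}$ is infinite; (4) $i:[T]^2\to[T]^{<\omega}$ with, for all $\{s,t\}$: (a) $v\in i\{s,t\}$ implies $v\preceq s,t$; (b) if $u\preceq s,t$ then $u\preceq v$ for some $v\in i\{s,t\}$. Its cardinal sequence is $\langle|T_\alpha|:\alpha<\eta\rangle$. If $S\subseteq T$ satisfies $i\{s,t\}\subseteq S$ for all $\{s,t\}\in[S]^2$, the restriction $\mathcal T\restriction S$ is $\langle S,\preceq\cap(S\times S), i\restriction[S]^2\rangle$. For a sequence of cardinals $f$, an $f$-skeleton is an LCS poset with $T=\bigcup\{\{\alpha\}\times A_\alpha:\alpha<\eta\}$ and cardinal sequence $f$ such that for each $\alpha<\eta$ there is a countable $O_\alpha\in[A_\alpha]^\omega$ with: $s\prec t$ and $\pi(s)=\alpha$ imply $\rho(s)\in O_\alpha$; (i) if $s,t\in\{\alpha\}\times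 O_\alpha$, $\rho(s)\ne\rho(t)$, then $i\{s,t\}=\emptyset$; (ii) if $\alpha+1<\eta$, $t\in\{\alpha+1\}\times A_{\alpha+1}$ and $s\prec t$, then there is $u\in\{\alpha\}\times O_\alpha$ with $s\preceq u\prec t$. $\langle\kappa\rangle_\alpha$ is the constant sequence of length $\alpha$ with value $\kappa$, and ${}^\frown$ is concatenation. Fix an uncountable cardinal $\lambda$. For an ordinal $\gamma$ let $Y_\gamma = (\gamma\times\omega)\cup(\{\gamma,\gamma+1\}\times\lambda)$, with levels $\{\alpha\}\times\omega$ ($\alpha<\gamma$), $\{\gamma\}\times\lambda$, $\{\gamma+1\}\times\lambda$. Let $\mathbb B^{(\gamma)}_S=\gamma\times\omega$ and, for $\zeta<\lambda$, $\mathbb B^{(\gamma)}_\zeta = \{\gamma\}\times[\omega\cdot\zeta,\omega\cdot\zeta+\omega)\cup\{\langle\gamma+1,\zeta\rangle\}$ (ordinal arithmetic). An adequate $\gamma$-poset is an LCS poset $\langle T,\preceq,i\rangle$ with $T=Y_\gamma$ such that for every $\zeta<\lambda$: (1) if $x\in\mathbb B^{(\gamma)}_\zeta$ with $\pi(x)=\gamma$, then $x\prec\langle\gamma+1,\zeta\rangle$ and $x\not\prec\langle\gamma+1,\xi\rangle$ for all $\xi\ne\zeta$; (2) the restriction of $\mathcal T$ to $\mathbb B^{(\gamma)}_S\cup\mathbb B^{(\gamma)}_\zeta$ is a $\langle\omega\rangle_{\gamma+1}{}^\frown\langle1\rangle$-skeleton. *)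

theory Defs
  imports Main "HOL-Library.Equipollence" "HOL-Library.Countable_Set"
begin

text \<open>Ordinals are modelled as elements of an arbitrary well-ordered type 'o
  (an element x stands for the order type of the set of its predecessors).\<close>

definition ozero :: "'o::wellorder" where
  "ozero = (LEAST x. True)"

definition osucc :: "'o::wellorder \<Rightarrow> 'o" where
  "osucc x = (LEAST y. x < y)"

definition oone :: "'o::wellorder" where
  "oone = osucc ozero"

definition olim0 :: "'o::wellorder \<Rightarrow> bool" where
  "olim0 x \<longleftrightarrow> (\<forall>y<x. osucc y < x)"

definition oomega :: "'o::wellorder" where
  "oomega = (LEAST x. x \<noteq> ozero \<and> olim0 x)"

definition oomega1 :: "'o::wellorder" where
  "oomega1 = (LEAST x. uncountable {y. y < x})"

text \<open>ordinal product omega times zeta, by transfinite recursion: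
  the least zero-or-limit ordinal above all omega times xi, xi < zeta\<close>
definition omega_mult :: "'o::wellorder \<Rightarrow> 'o" where
  "omega_mult = wfrec {(x, y). x < y} (\<lambda>f z. LEAST x. olim0 x \<and> (\<forall>w<z. f w < x))"

definition uncountable_cardinal :: "'o::wellorder \<Rightarrow> bool" where
  "uncountable_cardinal l \<longleftrightarrow> uncountable {y. y < l} \<and> (\<forall>x<l. \<not> ({y. y < x} \<approx> {y. y < l}))"

text \<open>Points are pairs (alpha, zeta); pi = fst, rho = snd.  The partial order is
  a predicate le on points (only relating points of T); i maps two-element sets
  to finite sets.\<close>

definition level :: "('o \<times> 'o) set \<Rightarrow> 'o \<Rightarrow> ('o \<times> 'o) set" where
  "level T a = {s \<in> T. fst s = a}"

definition lev_set :: "('o \<times> 'o) set \<Rightarrow> 'o \<Rightarrow> 'o set" where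
  "lev_set T a = {z. (a, z) \<in> T}"

definition strict :: "('p \<Rightarrow> 'p \<Rightarrow> bool) \<Rightarrow> 'p \<Rightarrow> 'p \<Rightarrow> bool" where
  "strict le s t \<longleftrightarrow> le s t \<and> s \<noteq> t"

definition LCS_poset ::
  "('o::wellorder \<times> 'o) set \<Rightarrow> ('o \<times> 'o \<Rightarrow> 'o \<times> 'o \<Rightarrow> bool) \<Rightarrow> (('o \<times> 'o) set \<Rightarrow> ('o \<times> 'o) set) \<Rightarrow> bool"
  where
  "LCS_poset T le i \<longleftrightarrow>
     \<comment> \<open>(1) partial order on T; the levels form a nonzero ordinal eta\<close>
     (\<forall>s t. le s t \<longrightarrow> s \<in> T \<and> t \<in> T) \<and>
     (\<forall>s\<in>T. le s s) \<and>
     (\<forall>s t. le s t \<and> le t s \<longrightarrow> s = t) \<and>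
     (\<forall>s t u. le s t \<and> le t u \<longrightarrow> le s u) \<and>
     T \<noteq> {} \<and>
     (\<forall>a b. b \<in> fst ` T \<and> a < b \<longrightarrow> a \<in> fst ` T) \<and>
     \<comment> \<open>(2)\<close>
     (\<forall>s t. strict le s t \<longrightarrow> fst s < fst t) \<and>
     \<comment> \<open>(3)\<close>
     (\<forall>t\<in>T. \<forall>a. a < fst t \<longrightarrow> infinite {s \<in> level T a. strict le s t}) \<and>
     \<comment> \<open>(4)\<close>
     (\<forall>s\<in>T. \<forall>t\<in>T. s \<noteq> t \<longrightarrow>
        finite (i {s, t}) \<and> i {s, t} \<subseteq> T \<and>
        (\<forall>v\<in>i {s, t}. le v s \<and> le v t) \<and>
        (\<forall>u. le u s \<and> le u t \<longrightarrow> (\<exists>v\<in>i {s, t}. le u v)))"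

text \<open>Cardinal sequence: the levels are exactly L (an initial segment of
  ordinals, i.e. eta) and level a has the cardinality of the ordinal f a.\<close>
definition has_cardseq :: "('o::wellorder \<times> 'o) set \<Rightarrow> 'o set \<Rightarrow> ('o \<Rightarrow> 'o) \<Rightarrow> bool" where
  "has_cardseq T L f \<longleftrightarrow> fst ` T = L \<and> (\<forall>a\<in>L. level T a \<approx> {y. y < f a})"

definition skeleton ::
  "'o set \<Rightarrow> ('o \<Rightarrow> 'o) \<Rightarrow> ('o::wellorder \<times> 'o) set \<Rightarrow> ('o \<times> 'o \<Rightarrow> 'o \<times> 'o \<Rightarrow> bool)
     \<Rightarrow> (('o \<times> 'o) set \<Rightarrow> ('o \<times> 'o) set) \<Rightarrow> bool"
  where
  "skeleton L f T le i \<longleftrightarrow>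
     LCS_poset T le i \<and> has_cardseq T L f \<and>
     (\<forall>a\<in>L. \<exists>Oa. Oa \<subseteq> lev_set T a \<and> countable Oa \<and>
        (\<forall>s t. strict le s t \<and> fst s = a \<longrightarrow> snd s \<in> Oa) \<and>
        (\<forall>x\<in>Oa. \<forall>y\<in>Oa. x \<noteq> y \<longrightarrow> i {(a, x), (a, y)} = {}) \<and>
        (osucc a \<in> L \<longrightarrow>
           (\<forall>t \<in> level T (osucc a). \<forall>s. strict le s t \<longrightarrow>
              (\<exists>x\<in>Oa. le s (a, x) \<and> strict le (a, x) t))))"

text \<open>Restriction of (T, le, i) to S: defined when S is closed under i.\<close>
definition closed_under :: "('p set \<Rightarrow> 'p set) \<Rightarrow> 'p set \<Rightarrow> bool" where
  "closed_under i S \<longleftrightarrow> (\<forall>s\<in>S. \<forall>t\<in>S. s \<noteq> t \<longrightarrow> i {s, t} \<subseteq> S)"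

definition restr :: "('p \<Rightarrow> 'p \<Rightarrow> bool) \<Rightarrow> 'p set \<Rightarrow> 'p \<Rightarrow> 'p \<Rightarrow> bool" where
  "restr le S s t \<longleftrightarrow> s \<in> S \<and> t \<in> S \<and> le s t"

definition Y :: "'o::wellorder \<Rightarrow> 'o \<Rightarrow> ('o \<times> 'o) set" where
  "Y l g = {(a, n). a < g \<and> n < oomega} \<union> {(a, z). (a = g \<or> a = osucc g) \<and> z < l}"

definition BS :: "'o::wellorder \<Rightarrow> ('o \<times> 'o) set" where
  "BS g = {(a, n). a < g \<and> n < oomega}"

definition Bz :: "'o::wellorder \<Rightarrow> 'o \<Rightarrow> ('o \<times> 'o) set" where
  "Bz g z = {(g, x) | x. omega_mult z \<le> x \<and> x < omega_mult (osucc z)} \<union> {(osucc g, z)}"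

definition adequate ::
  "'o::wellorder \<Rightarrow> 'o \<Rightarrow> ('o \<times> 'o \<Rightarrow> 'o \<times> 'o \<Rightarrow> bool) \<Rightarrow> (('o \<times> 'o) set \<Rightarrow> ('o \<times> 'o) set) \<Rightarrow> bool"
  where
  "adequate l g le i \<longleftrightarrow>
     LCS_poset (Y l g) le i \<and>
     (\<forall>z<l.
        (\<forall>x\<in>Bz g z. fst x = g \<longrightarrow>
           strict le x (osucc g, z) \<and> (\<forall>w. w \<noteq> z \<longrightarrow> \<not> strict le x (osucc g, w))) \<and>
        closed_under i (BS g \<union> Bz g z) \<and>
        skeleton {a. a \<le> osucc g} (\<lambda>a. if a \<le> g then oomega else oone)
          (BS g \<union> Bz g z) (restr le (BS g \<union> Bz g z)) i)"

end

theory Submission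
  imports Defs
begin

text \<open>For an adequate \<open>\<omega>\<^sub>1\<close>-poset and \<open>\<zeta> < \<lambda>\<close> let \<open>D\<^sub>\<zeta> \<subseteq> \<omega>\<close> be the set of \<open>n\<close> with
  \<open>(0, n) \<preceq> (\<omega>\<^sub>1 + 1, \<zeta>)\<close>. The map \<open>\<zeta> \<mapsto> D\<^sub>\<zeta>\<close> is injective: if \<open>D\<^sub>\<zeta> = D\<^sub>\<xi>\<close>, each of the
  infinitely many points of the \<open>\<zeta>\<close>-block on level \<open>\<omega>\<^sub>1\<close> has a ground point below it that also
  lies below one of the finitely many points of \<open>i{(\<omega>\<^sub>1 + 1, \<zeta>), (\<omega>\<^sub>1 + 1, \<xi>)}\<close>; each of these
  passes through a single block point, so by pigeonhole two distinct block points have a common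
  lower bound, contradicting the skeleton condition that their meet is empty.

  Coding the finite initial segments of the sets \<open>D\<^sub>\<zeta>\<close> by naturals turns them into \<open>\<lambda>\<close> almost
  disjoint infinite subsets of \<open>\<omega>\<close>, which can be split further into almost disjoint sets
  indexed by the points of the blocks. With such a family the adequate \<open>\<gamma>\<close>-posets for
  \<open>\<gamma> = \<omega>\<close> and \<open>\<gamma> = 1\<close> are built directly: below level \<open>\<gamma>\<close> lies a forest of height \<open>\<gamma>\<close> whose
  trees are indexed by naturals, a point on level \<open>\<gamma>\<close> lies above the trees indexed by its set,
  a top point above the trees indexed by the union over its block, and the meet of two
  incomparable points consists of the roots of the (finitely many) common trees.\<close>

section \<open>Ordinals in a well-ordered type\<close>

lemma ozero_le [simp]: "ozero \<le> (x::'o::wellorder)"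
  unfolding ozero_def by (rule Least_le) simp

lemma osucc_greater: "(x::'o::wellorder) < y \<Longrightarrow> x < osucc x"
  unfolding osucc_def by (rule LeastI)

lemma osucc_le: "(x::'o::wellorder) < y \<Longrightarrow> osucc x \<le> y"
  unfolding osucc_def by (rule Least_le)

lemma less_osucc_imp_le: "(x::'o::wellorder) < y \<Longrightarrow> z < osucc x \<Longrightarrow> z \<le> x"
  using osucc_le by (metis not_le order.strict_trans2)

definition ord_of_nat :: "nat \<Rightarrow> 'o::wellorder" where
  "ord_of_nat n = (osucc ^^ n) ozero"

lemma ord_of_nat_0 [simp]: "ord_of_nat 0 = ozero"
  by (simp add: ord_of_nat_def)

lemma ord_of_nat_Suc: "ord_of_nat (Suc n) = osucc (ord_of_nat n)"
  by (simp add: ord_of_nat_def)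

text \<open>In a countable type \<open>oomega\<close> is a junk value, hence the hypothesis.\<close>

lemma range_ord_of_nat:
  assumes "uncountable (UNIV::'o::wellorder set)"
  shows "range ord_of_nat = {y::'o. y < oomega}"
proof -
  have "countable (range (ord_of_nat::nat \<Rightarrow> 'o))" by simp
  then have ex: "\<exists>y :: 'o. y \<notin> range ord_of_nat" using assms by (metis UNIV_eq_I)
  define y0 :: 'o where "y0 = (LEAST y. y \<notin> range ord_of_nat)"
  have y0: "y0 \<notin> range ord_of_nat" unfolding y0_def using ex by (metis LeastI)
  have below: "y < y0 \<Longrightarrow> y \<in> range ord_of_nat" for y
    unfolding y0_def using not_less_Least by blast
  have nz: "y0 \<noteq> ozero" using y0 by (metis ord_of_nat_0 rangeI)
  have lim: "olim0 y0" unfolding olim0_def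
  proof (intro allI impI)
    fix q assume q: "q < y0"
    then obtain n where n: "q = ord_of_nat n" using below by blast
    have "osucc q \<le> y0" using q osucc_le by blast
    moreover have "osucc q \<noteq> y0" using y0 n ord_of_nat_Suc by (metis rangeI)
    ultimately show "osucc q < y0" by simp
  qed
  have omega: "(oomega::'o) \<noteq> ozero \<and> olim0 (oomega::'o)" unfolding oomega_def
    using LeastI[of "\<lambda>x. x \<noteq> ozero \<and> olim0 x" y0] nz lim by blast
  have le: "oomega \<le> y0" unfolding oomega_def by (rule Least_le) (use nz lim in simp)
  have "ord_of_nat n < (oomega::'o)" for n
  proof (induction n)
    case 0 then show ?case using omega by (metis ord_of_nat_0 ozero_le order.not_eq_order_implies_strict)
  next
    case (Suc n) then show ?case using omega unfolding olim0_def by (simp add: ord_of_nat_Suc)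
  qed
  then show ?thesis using le below by fastforce
qed

lemma strict_mono_ord_of_nat:
  assumes "uncountable (UNIV::'o::wellorder set)"
  shows "strict_mono (ord_of_nat :: nat \<Rightarrow> 'o)"
proof -
  have "(ord_of_nat n::'o) < ord_of_nat (Suc n)" for n
    using range_ord_of_nat[OF assms] osucc_greater by (metis ord_of_nat_Suc rangeI mem_Collect_eq)
  then show ?thesis by (simp add: strict_mono_Suc_iff)
qed

lemma infinite_below_oomega:
  assumes "uncountable (UNIV::'o::wellorder set)"
  shows "infinite {y::'o. y < oomega}"
  using range_ord_of_nat[OF assms] strict_mono_ord_of_nat[OF assms]
  by (metis range_inj_infinite strict_mono_imp_inj_on)

lemma uncountable_cardinal_olim0:
  fixes l :: "'o::wellorder"
  assumes "uncountable_cardinal l"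
  shows "olim0 l"
  unfolding olim0_def
proof (intro allI impI)
  fix y assume yl: "y < l"
  have unc: "uncountable {y. y < l}" using assms unfolding uncountable_cardinal_def by blast
  show "osucc y < l"
  proof (rule ccontr)
    assume "\<not> osucc y < l"
    then have eq: "osucc y = l" using osucc_le[OF yl] by simp
    have set: "{x. x < l} = insert y {x. x < y}"
      using less_osucc_imp_le[OF yl] eq yl by (auto simp: order.order_iff_strict)
    have "infinite {x. x < y}" using unc set countable_finite finite_insert by metis
    then have "insert y {x. x < y} \<approx> {x. x < y}" by (rule infinite_insert_eqpoll)
    then have "{x. x < y} \<approx> {x. x < l}" unfolding set by (rule eqpoll_sym)
    then show False using assms yl unfolding uncountable_cardinal_def by blast
  qed
qed

section \<open>The blocks \<open>[\<omega>\<cdot>\<zeta>, \<omega>\<cdot>\<zeta> + \<omega>)\<close>\<close>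

lemma omega_mult_unfold:
  "omega_mult (z::'o::wellorder) = (LEAST x. olim0 x \<and> (\<forall>w<z. omega_mult w < x))"
proof -
  have "wf {(x::'o, y). x < y}" by (rule wf)
  then show ?thesis
    by (subst omega_mult_def, subst wfrec) (simp_all add: cut_apply omega_mult_def[symmetric])
qed

definition omega_block :: "'o::wellorder \<Rightarrow> 'o set" where
  "omega_block z = {x. omega_mult z \<le> x \<and> x < omega_mult (osucc z)}"

lemma omega_mult_least:
  fixes l :: "'o::wellorder"
  assumes "olim0 l \<and> (\<forall>w<z. omega_mult w < l)"
  shows "olim0 (omega_mult z) \<and> (\<forall>w<z. omega_mult w < omega_mult z) \<and> omega_mult z \<le> l"
proof -
  let ?P = "\<lambda>x. olim0 x \<and> (\<forall>w<z. omega_mult w < x)"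
  have unfold: "omega_mult z = (LEAST x. ?P x)" by (rule omega_mult_unfold)
  show ?thesis unfolding unfold using LeastI[of ?P l, OF assms] Least_le[of ?P l, OF assms] by blast
qed

lemma le_omega_mult:
  fixes l :: "'o::wellorder"
  assumes increasing: "\<And>z. z \<le> l \<Longrightarrow> \<forall>w<z. omega_mult w < omega_mult z" and "w \<le> l"
  shows "w \<le> omega_mult w"
  using \<open>w \<le> l\<close>
proof (induction w rule: less_induct)
  case (less w)
  show ?case
  proof (rule ccontr)
    assume "\<not> w \<le> omega_mult w"
    then have v: "omega_mult w < w" by simp
    then have "omega_mult w \<le> omega_mult (omega_mult w)" using less by simp
    moreover have "omega_mult (omega_mult w) < omega_mult w" using increasing[OF less.prems] v by blast
    ultimately show False by simp
  qed
qed

text \<open>If every block starts below the limit \<open>l\<close>, the blocks \<open>\<zeta> < l\<close> cover \<open>l\<close>: a point \<open>y\<close>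
  lies in the block of the least \<open>\<zeta>\<close> with \<open>y < \<omega>\<cdot>\<zeta>\<close> when \<open>\<zeta>\<close> is a successor, and no
  such \<open>\<zeta>\<close> can be a limit, since \<open>\<omega>\<cdot>\<zeta>\<close> is then the least limit above all \<open>\<omega>\<cdot>\<xi>\<close>, \<open>\<xi> < \<zeta>\<close>.\<close>

lemma omega_blocks_cover:
  fixes l :: "'o::wellorder"
  assumes lim: "olim0 l" and start: "\<forall>z<l. \<exists>x. x \<in> omega_block z \<and> x < l"
  shows "\<forall>y<l. \<exists>z<l. y \<in> omega_block z"
proof (intro allI impI)
  have below_l: "omega_mult w < l" if "w < l" for w
    using start that unfolding omega_block_def by fastforce
  have b: "olim0 (omega_mult z) \<and> (\<forall>w<z. omega_mult w < omega_mult z) \<and> omega_mult z \<le> l"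
    if "z \<le> l" for z
    by (rule omega_mult_least) (use lim below_l that in auto)
  fix y assume yl: "y < l"
  have sy: "osucc y < l" using lim yl unfolding olim0_def by blast
  have "y < osucc y" using osucc_greater yl by blast
  also have "osucc y \<le> omega_mult (osucc y)"
    using le_omega_mult[of l "osucc y"] b sy by (meson less_imp_le)
  finally have ex: "y < omega_mult (osucc y)" .
  define z0 where "z0 = (LEAST z. y < omega_mult z)"
  have z0: "y < omega_mult z0" unfolding z0_def using LeastI ex by metis
  have z0l: "z0 < l" using Least_le[of "\<lambda>z. y < omega_mult z", OF ex] sy unfolding z0_def by simp
  have min: "w < z0 \<Longrightarrow> omega_mult w \<le> y" for w unfolding z0_def using not_less_Least by (metis not_le)
  show "\<exists>z<l. y \<in> omega_block z"
  proof (cases "\<exists>w. z0 = osucc w \<and> w < z0")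
    case True
    then obtain w where w: "z0 = osucc w" "w < z0" by blast
    then have "w < l" using z0l by simp
    then show ?thesis using min[OF w(2)] z0 w(1) unfolding omega_block_def by blast
  next
    case False
    have suc: "osucc w < z0" if "w < z0" for w
    proof -
      have "osucc w \<le> z0" using that osucc_le by blast
      moreover have "osucc w \<noteq> z0" using False that by blast
      ultimately show ?thesis by simp
    qed
    have mult_suc: "omega_mult w < omega_mult (osucc w)" if "w < z0" for w
      using b[of "osucc w"] suc[OF that] z0l osucc_greater[OF that] by auto
    have strict: "omega_mult w < y" if "w < z0" for w
      using mult_suc[OF that] min[OF suc[OF that]] by (rule order.strict_trans2)
    define s where "s = (LEAST x. \<forall>w<z0. omega_mult w < x)"
    have s1: "\<forall>w<z0. omega_mult w < s"
      unfolding s_def using LeastI[of "\<lambda>x. \<forall>w<z0. omega_mult w < x" y] strict by blast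
    have s2: "s \<le> y"
      unfolding s_def using Least_le[of "\<lambda>x. \<forall>w<z0. omega_mult w < x" y] strict by blast
    have slim: "olim0 s" unfolding olim0_def
    proof (intro allI impI)
      fix q assume q: "q < s"
      have "\<not> (\<forall>w<z0. omega_mult w < q)" using q unfolding s_def using not_less_Least by blast
      then obtain w where w: "w < z0" "q \<le> omega_mult w" by (auto simp: not_less)
      then have "q < omega_mult (osucc w)" using mult_suc[OF w(1)] by simp
      then have "osucc q \<le> omega_mult (osucc w)" by (rule osucc_le)
      also have "omega_mult (osucc w) < s" using s1 suc[OF w(1)] by blast
      finally show "osucc q < s" .
    qed
    have "omega_mult z0 \<le> s"
      unfolding omega_mult_unfold[of z0] by (rule Least_le) (use slim s1 in blast)
    then show ?thesis using s2 z0 by simp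
  qed
qed

lemma LCS_posetD:
  assumes "LCS_poset T le i"
  shows LCS_poset_mem: "le s t \<Longrightarrow> s \<in> T \<and> t \<in> T"
    and LCS_poset_refl: "s \<in> T \<Longrightarrow> le s s"
    and LCS_poset_antisym: "le s t \<Longrightarrow> le t s \<Longrightarrow> s = t"
    and LCS_poset_trans: "le s t \<Longrightarrow> le t u \<Longrightarrow> le s u"
    and LCS_poset_strict_fst: "strict le s t \<Longrightarrow> fst s < fst t"
    and LCS_poset_infinite_below: "t \<in> T \<Longrightarrow> a < fst t \<Longrightarrow> infinite {s \<in> level T a. strict le s t}"
proof -
  have "\<forall>s t. le s t \<longrightarrow> s \<in> T \<and> t \<in> T"
    using assms unfolding LCS_poset_def by (elim conjE) assumption
  then show "le s t \<Longrightarrow> s \<in> T \<and> t \<in> T" by blast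
  have "\<forall>s\<in>T. le s s" using assms unfolding LCS_poset_def by (elim conjE) assumption
  then show "s \<in> T \<Longrightarrow> le s s" by blast
  have "\<forall>s t. le s t \<and> le t s \<longrightarrow> s = t" using assms unfolding LCS_poset_def by (elim conjE) assumption
  then show "le s t \<Longrightarrow> le t s \<Longrightarrow> s = t" by blast
  have "\<forall>s t u. le s t \<and> le t u \<longrightarrow> le s u" using assms unfolding LCS_poset_def by (elim conjE) assumption
  then show "le s t \<Longrightarrow> le t u \<Longrightarrow> le s u" by blast
  have "\<forall>s t. strict le s t \<longrightarrow> fst s < fst t" using assms unfolding LCS_poset_def by (elim conjE) assumption
  then show "strict le s t \<Longrightarrow> fst s < fst t" by blast
  have "\<forall>t\<in>T. \<forall>a. a < fst t \<longrightarrow> infinite {s \<in> level T a. strict le s t}"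
    using assms unfolding LCS_poset_def by (elim conjE) assumption
  then show "t \<in> T \<Longrightarrow> a < fst t \<Longrightarrow> infinite {s \<in> level T a. strict le s t}" by blast
qed

lemma LCS_poset_meet:
  assumes "LCS_poset T le i" "s \<in> T" "t \<in> T" "s \<noteq> t"
  shows LCS_poset_finite_meet: "finite (i {s, t})"
    and LCS_poset_meet_subset: "i {s, t} \<subseteq> T"
    and LCS_poset_meet_lower: "v \<in> i {s, t} \<Longrightarrow> le v s \<and> le v t"
    and LCS_poset_meet_cover: "le u s \<Longrightarrow> le u t \<Longrightarrow> \<exists>v\<in>i {s, t}. le u v"
proof -
  have "\<forall>s\<in>T. \<forall>t\<in>T. s \<noteq> t \<longrightarrow> finite (i {s, t}) \<and> i {s, t} \<subseteq> T \<and>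
      (\<forall>v\<in>i {s, t}. le v s \<and> le v t) \<and> (\<forall>u. le u s \<and> le u t \<longrightarrow> (\<exists>v\<in>i {s, t}. le u v))"
    using assms(1) unfolding LCS_poset_def by (elim conjE) assumption
  then have "finite (i {s, t}) \<and> i {s, t} \<subseteq> T \<and>
      (\<forall>v\<in>i {s, t}. le v s \<and> le v t) \<and> (\<forall>u. le u s \<and> le u t \<longrightarrow> (\<exists>v\<in>i {s, t}. le u v))"
    using assms(2-4) by blast
  then show "finite (i {s, t})" "i {s, t} \<subseteq> T" "v \<in> i {s, t} \<Longrightarrow> le v s \<and> le v t"
    "le u s \<Longrightarrow> le u t \<Longrightarrow> \<exists>v\<in>i {s, t}. le u v" by blast+
qed

lemma LCS_poset_restr:
  assumes L: "LCS_poset T le i" and ST: "S \<subseteq> T" and cl: "closed_under i S"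
    and down: "\<forall>u t. le u t \<and> t \<in> S \<longrightarrow> u \<in> S" and ne: "S \<noteq> {}"
    and lev: "\<forall>a b. b \<in> fst ` S \<and> a < b \<longrightarrow> a \<in> fst ` S"
  shows "LCS_poset S (restr le S) i"
  unfolding LCS_poset_def
proof (intro conjI)
  show "\<forall>s t. restr le S s t \<longrightarrow> s \<in> S \<and> t \<in> S" unfolding restr_def by blast
  show "\<forall>s\<in>S. restr le S s s" unfolding restr_def using LCS_poset_refl[OF L] ST by blast
  show "\<forall>s t. restr le S s t \<and> restr le S t s \<longrightarrow> s = t" unfolding restr_def using LCS_poset_antisym[OF L] by blast
  show "\<forall>s t u. restr le S s t \<and> restr le S t u \<longrightarrow> restr le S s u" unfolding restr_def using LCS_poset_trans[OF L] by blast
  show "S \<noteq> {}" by (rule ne)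
  show "\<forall>a b. b \<in> fst ` S \<and> a < b \<longrightarrow> a \<in> fst ` S" by (rule lev)
  show "\<forall>s t. strict (restr le S) s t \<longrightarrow> fst s < fst t"
    unfolding strict_def restr_def using LCS_poset_strict_fst[OF L] unfolding strict_def by blast
  show "\<forall>t\<in>S. \<forall>a. a < fst t \<longrightarrow> infinite {s \<in> level S a. strict (restr le S) s t}"
  proof (intro ballI allI impI)
    fix t a assume t: "t \<in> S" and a: "a < fst t"
    have "{s \<in> level T a. strict le s t} = {s \<in> level S a. strict (restr le S) s t}"
      unfolding level_def strict_def restr_def using t down ST by blast
    then show "infinite {s \<in> level S a. strict (restr le S) s t}"
      using LCS_poset_infinite_below[OF L _ a] t ST by auto
  qed
  show "\<forall>s\<in>S. \<forall>t\<in>S. s \<noteq> t \<longrightarrow>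
        finite (i {s, t}) \<and> i {s, t} \<subseteq> S \<and>
        (\<forall>v\<in>i {s, t}. restr le S v s \<and> restr le S v t) \<and>
        (\<forall>u. restr le S u s \<and> restr le S u t \<longrightarrow> (\<exists>v\<in>i {s, t}. restr le S u v))"
  proof (intro ballI impI)
    fix s t assume s: "s \<in> S" and t: "t \<in> S" and st: "s \<noteq> t"
    have sT: "s \<in> T" and tT: "t \<in> T" using s t ST by auto
    have iS: "i {s, t} \<subseteq> S" using cl s t st unfolding closed_under_def by blast
    show "finite (i {s, t}) \<and> i {s, t} \<subseteq> S \<and>
        (\<forall>v\<in>i {s, t}. restr le S v s \<and> restr le S v t) \<and>
        (\<forall>u. restr le S u s \<and> restr le S u t \<longrightarrow> (\<exists>v\<in>i {s, t}. restr le S u v))"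
    proof (intro conjI)
    show "finite (i {s, t})" using LCS_poset_finite_meet[OF L sT tT st] .
    show "i {s, t} \<subseteq> S" by (rule iS)
    show "\<forall>v\<in>i {s, t}. restr le S v s \<and> restr le S v t"
      using LCS_poset_meet_lower[OF L sT tT st] iS s t unfolding restr_def by blast
    show "\<forall>u. restr le S u s \<and> restr le S u t \<longrightarrow> (\<exists>v\<in>i {s, t}. restr le S u v)"
    proof (intro allI impI)
      fix u assume "restr le S u s \<and> restr le S u t"
      then have u: "u \<in> S" "le u s" "le u t" unfolding restr_def by auto
      obtain v where "v \<in> i {s, t}" "le u v" using LCS_poset_meet_cover[OF L sT tT st u(2,3)] by blast
      then show "\<exists>v\<in>i {s, t}. restr le S u v" using iS u(1) unfolding restr_def by blast
    qed
    qed
  qed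
qed

lemma skeleton_level_below_successor:
  assumes "skeleton L f S le i" "a \<in> L" "osucc a \<in> L"
  obtains Oa where "\<forall>s t. strict le s t \<and> fst s = a \<longrightarrow> snd s \<in> Oa"
    and "\<forall>x\<in>Oa. \<forall>y\<in>Oa. x \<noteq> y \<longrightarrow> i {(a, x), (a, y)} = {}"
    and "\<forall>t \<in> level S (osucc a). \<forall>s. strict le s t \<longrightarrow> (\<exists>x\<in>Oa. le s (a, x) \<and> strict le (a, x) t)"
  using assms that unfolding skeleton_def by (elim conjE) (drule bspec, assumption, blast)

definition slice :: "'o::wellorder \<Rightarrow> 'o \<Rightarrow> ('o \<times> 'o) set" where
  "slice g z = BS g \<union> Bz g z"

lemma adequate_LCS_poset: "adequate l g le i \<Longrightarrow> LCS_poset (Y l g) le i"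
  unfolding adequate_def by (elim conjE)

lemma adequateD:
  assumes "adequate l g le i" "z < l"
  shows adequate_slice_skeleton:
      "skeleton {a. a \<le> osucc g} (\<lambda>a. if a \<le> g then oomega else oone) (slice g z) (restr le (slice g z)) i"
    and adequate_block_below_top: "x \<in> omega_block z \<Longrightarrow> strict le (g, x) (osucc g, z)"
    and adequate_block_not_below: "x \<in> omega_block z \<Longrightarrow> w \<noteq> z \<Longrightarrow> \<not> strict le (g, x) (osucc g, w)"
proof -
  have "(\<forall>x\<in>Bz g z. fst x = g \<longrightarrow> strict le x (osucc g, z) \<and> (\<forall>w. w \<noteq> z \<longrightarrow> \<not> strict le x (osucc g, w))) \<and>
      skeleton {a. a \<le> osucc g} (\<lambda>a. if a \<le> g then oomega else oone) (slice g z) (restr le (slice g z)) i"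
    using assms unfolding adequate_def slice_def by (elim conjE allE impE) auto
  moreover have "x \<in> omega_block z \<Longrightarrow> (g, x) \<in> Bz g z" unfolding omega_block_def Bz_def by blast
  ultimately show "skeleton {a. a \<le> osucc g} (\<lambda>a. if a \<le> g then oomega else oone) (slice g z) (restr le (slice g z)) i"
    "x \<in> omega_block z \<Longrightarrow> strict le (g, x) (osucc g, z)"
    "x \<in> omega_block z \<Longrightarrow> w \<noteq> z \<Longrightarrow> \<not> strict le (g, x) (osucc g, w)"
    by auto
qed
section \<open>The trace of an adequate \<open>\<omega>\<^sub>1\<close>-poset\<close>

locale adequate_omega1 =
  fixes l :: "'o::wellorder"
    and le :: "'o \<times> 'o \<Rightarrow> 'o \<times> 'o \<Rightarrow> bool"
    and i :: "('o \<times> 'o) set \<Rightarrow> ('o \<times> 'o) set"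
  assumes uncountable_cardinal: "uncountable_cardinal l"
    and bounded: "\<exists>x. l < x"
    and adequate: "adequate l (oomega1::'o) le i"
begin

abbreviation g :: 'o where "g \<equiv> oomega1"

lemma uncountable_below_l: "uncountable {y. y < l}"
  using uncountable_cardinal unfolding uncountable_cardinal_def by blast

lemma uncountable_UNIV: "uncountable (UNIV :: 'o set)"
  using uncountable_below_l countable_subset[OF subset_UNIV] by blast

lemma g_le_l: "g \<le> l"
  unfolding oomega1_def by (rule Least_le) (rule uncountable_below_l)

lemma ozero_less_g: "ozero < g"
proof -
  have "uncountable {y. y < g}" unfolding oomega1_def by (rule LeastI) (rule uncountable_below_l)
  moreover have "{y. y < ozero} = {}" using ozero_le not_le by blast
  ultimately have "g \<noteq> ozero" by (metis countable_empty)
  then show ?thesis using ozero_le[of g] by (simp add: order.order_iff_strict)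
qed

lemma g_less_osucc: "g < osucc g"
proof -
  obtain x where "l < x" using bounded by blast
  then have "g < x" using g_le_l by simp
  then show ?thesis by (rule osucc_greater)
qed

lemma ord_of_nat_range: "range ord_of_nat = {y::'o. y < oomega}"
  using range_ord_of_nat[OF uncountable_UNIV] .

lemma ord_of_nat_strict_mono: "strict_mono (ord_of_nat :: nat \<Rightarrow> 'o)"
  using strict_mono_ord_of_nat[OF uncountable_UNIV] .

lemma ord_of_nat_eq_iff [simp]: "(ord_of_nat n :: 'o) = ord_of_nat m \<longleftrightarrow> n = m"
  using ord_of_nat_strict_mono by (simp add: strict_mono_eq)

lemma ord_of_nat_less_iff [simp]: "(ord_of_nat n :: 'o) < ord_of_nat m \<longleftrightarrow> n < m"
  using ord_of_nat_strict_mono by (simp add: strict_mono_less)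

lemma ord_of_nat_less_oomega: "ord_of_nat n < (oomega::'o)"
  using ord_of_nat_range by blast

lemma ground_in_BS: "(ozero, ord_of_nat n) \<in> BS g"
  using ozero_less_g ord_of_nat_less_oomega unfolding BS_def by simp

lemma ozero_less_l: "ozero < l"
  using ozero_less_g g_le_l by simp

lemma below_oone: "{y::'o. y < oone} = {ozero}"
  using less_osucc_imp_le[OF ozero_less_g] osucc_greater[OF ozero_less_g] ozero_le
  unfolding oone_def by (auto intro: order.antisym)

lemma LCS_Y: "LCS_poset (Y l g) le i"
  using adequate_LCS_poset[OF adequate] .

lemma top_in_Y: "z < l \<Longrightarrow> (osucc g, z) \<in> Y l g"
  unfolding Y_def by blast

lemma block_below_top: "z < l \<Longrightarrow> x \<in> omega_block z \<Longrightarrow> strict le (g, x) (osucc g, z)"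
  using adequate_block_below_top[OF adequate] .

lemma block_not_below_other_top:
  "z < l \<Longrightarrow> x \<in> omega_block z \<Longrightarrow> w \<noteq> z \<Longrightarrow> \<not> strict le (g, x) (osucc g, w)"
  using adequate_block_not_below[OF adequate] .

lemma block_less: "z < l \<Longrightarrow> x \<in> omega_block z \<Longrightarrow> x < l"
  using block_below_top LCS_poset_mem[OF LCS_Y] unfolding strict_def Y_def by blast

lemma blocks_disjoint: "z < l \<Longrightarrow> w < l \<Longrightarrow> z \<noteq> w \<Longrightarrow> omega_block z \<inter> omega_block w = {}"
  using block_below_top block_not_below_other_top by blast

lemma level_slice_omega1: "level (slice g z) g = (\<lambda>x. (g, x)) ` omega_block z"
  using g_less_osucc unfolding level_def slice_def BS_def Bz_def omega_block_def by auto

lemma top_in_slice: "(osucc g, z) \<in> slice g z"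
  unfolding slice_def Bz_def by blast

lemma BS_subset_slice: "BS g \<subseteq> slice g z"
  unfolding slice_def by blast

lemma block_eqpoll_omega: "z < l \<Longrightarrow> omega_block z \<approx> {y. y < (oomega::'o)}"
proof -
  assume zl: "z < l"
  have "has_cardseq (slice g z) {a. a \<le> osucc g} (\<lambda>a. if a \<le> g then oomega else oone)"
    using adequate_slice_skeleton[OF adequate zl] unfolding skeleton_def by (elim conjE)
  moreover have "g \<in> {a. a \<le> osucc g}" using g_less_osucc by simp
  ultimately have "level (slice g z) g \<approx> {y. y < (if g \<le> g then (oomega::'o) else oone)}"
    unfolding has_cardseq_def by (elim conjE) (drule bspec, assumption)
  then have "level (slice g z) g \<approx> {y. y < (oomega::'o)}" by simp
  moreover have "level (slice g z) g \<approx> omega_block z"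
    unfolding level_slice_omega1 by (rule inj_on_image_eqpoll_self) (simp add: inj_on_def)
  ultimately show ?thesis using eqpoll_sym eqpoll_trans by blast
qed

lemma block_infinite: "z < l \<Longrightarrow> infinite (omega_block z)"
  using block_eqpoll_omega infinite_below_oomega[OF uncountable_UNIV] eqpoll_finite_iff by blast

lemma blocks_cover: "y < l \<Longrightarrow> \<exists>z<l. y \<in> omega_block z"
proof -
  have "olim0 l" using uncountable_cardinal_olim0 uncountable_cardinal by blast
  moreover have "\<forall>z<l. \<exists>x. x \<in> omega_block z \<and> x < l"
    using block_infinite block_less by (metis ex_in_conv finite.emptyI)
  ultimately show "y < l \<Longrightarrow> \<exists>z<l. y \<in> omega_block z" using omega_blocks_cover by blast
qed

lemma slice_skeleton_omega1:
  assumes "z < l"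
  obtains Oa where "\<And>s t. strict (restr le (slice g z)) s t \<Longrightarrow> fst s = g \<Longrightarrow> snd s \<in> Oa"
    and "\<And>x y. x \<in> Oa \<Longrightarrow> y \<in> Oa \<Longrightarrow> x \<noteq> y \<Longrightarrow> i {(g, x), (g, y)} = {}"
    and "\<And>s. strict (restr le (slice g z)) s (osucc g, z) \<Longrightarrow> \<exists>x\<in>Oa. restr le (slice g z) s (g, x)"
proof -
  have gin: "g \<in> {a. a \<le> osucc g}" using g_less_osucc by simp
  have sin: "osucc g \<in> {a. a \<le> osucc g}" by simp
  obtain Oa where O1: "\<forall>s t. strict (restr le (slice g z)) s t \<and> fst s = g \<longrightarrow> snd s \<in> Oa"
    and O2: "\<forall>x\<in>Oa. \<forall>y\<in>Oa. x \<noteq> y \<longrightarrow> i {(g, x), (g, y)} = {}"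
    and O3: "\<forall>t \<in> level (slice g z) (osucc g). \<forall>s. strict (restr le (slice g z)) s t \<longrightarrow>
         (\<exists>x\<in>Oa. restr le (slice g z) s (g, x) \<and> strict (restr le (slice g z)) (g, x) t)"
    by (rule skeleton_level_below_successor[OF adequate_slice_skeleton[OF adequate assms] gin sin])
  have top: "(osucc g, z) \<in> level (slice g z) (osucc g)"
    unfolding level_def using top_in_slice by simp
  show ?thesis
  proof (rule that)
    show "\<And>s t. strict (restr le (slice g z)) s t \<Longrightarrow> fst s = g \<Longrightarrow> snd s \<in> Oa" using O1 by blast
    show "\<And>x y. x \<in> Oa \<Longrightarrow> y \<in> Oa \<Longrightarrow> x \<noteq> y \<Longrightarrow> i {(g, x), (g, y)} = {}" using O2 by blast
    show "\<And>s. strict (restr le (slice g z)) s (osucc g, z) \<Longrightarrow> \<exists>x\<in>Oa. restr le (slice g z) s (g, x)"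
      using bspec[OF O3 top] by blast
  qed
qed

lemma LCS_slice:
  assumes "z < l" shows "LCS_poset (slice g z) (restr le (slice g z)) i"
  using adequate_slice_skeleton[OF adequate assms] unfolding skeleton_def by (elim conjE)

lemma mid_in_slice_iff: "(g, x) \<in> slice g z \<longleftrightarrow> x \<in> omega_block z"
  using g_less_osucc unfolding slice_def BS_def Bz_def omega_block_def by auto

text \<open>By the skeleton condition two points of one block meet in the empty set.\<close>

lemma block_points_no_common_lower_bound:
  assumes zl: "z < l" and x: "x \<in> omega_block z" and y: "y \<in> omega_block z" and "x \<noteq> y"
    and u: "u \<in> BS g" "le u (g, x)" "le u (g, y)"
  shows False
proof -
  obtain Oa where O1: "\<And>s t. strict (restr le (slice g z)) s t \<Longrightarrow> fst s = g \<Longrightarrow> snd s \<in> Oa"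
    and O2: "\<And>x y. x \<in> Oa \<Longrightarrow> y \<in> Oa \<Longrightarrow> x \<noteq> y \<Longrightarrow> i {(g, x), (g, y)} = {}"
    and "\<And>s. strict (restr le (slice g z)) s (osucc g, z) \<Longrightarrow> \<exists>x\<in>Oa. restr le (slice g z) s (g, x)"
    using slice_skeleton_omega1[OF zl] by metis
  have in_O: "x' \<in> Oa" if "x' \<in> omega_block z" for x'
  proof -
    have "(g, x') \<in> slice g z" using that mid_in_slice_iff by blast
    then have "strict (restr le (slice g z)) (g, x') (osucc g, z)"
      using block_below_top[OF zl that] top_in_slice unfolding strict_def restr_def by blast
    then show ?thesis using O1[of "(g, x')" "(osucc g, z)"] by simp
  qed
  have gx: "(g, x) \<in> slice g z" and gy: "(g, y) \<in> slice g z"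
    using x y mid_in_slice_iff by blast+
  have "restr le (slice g z) u (g, x)" "restr le (slice g z) u (g, y)"
    using u gx gy BS_subset_slice unfolding restr_def by blast+
  then obtain v where "v \<in> i {(g, x), (g, y)}"
    using LCS_poset_meet_cover[OF LCS_slice[OF zl] gx gy] \<open>x \<noteq> y\<close> by blast
  then show False using O2[OF in_O[OF x] in_O[OF y] \<open>x \<noteq> y\<close>] by simp
qed

lemma below_top_through_block:
  assumes zl: "z < l" and v: "v \<in> BS g" "le v (osucc g, z)"
  obtains y where "y \<in> omega_block z" "le v (g, y)"
proof -
  obtain Oa where O3: "\<And>s. strict (restr le (slice g z)) s (osucc g, z) \<Longrightarrow> \<exists>x\<in>Oa. restr le (slice g z) s (g, x)"
    using slice_skeleton_omega1[OF zl] by metis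
  have "v \<noteq> (osucc g, z)" using v(1) g_less_osucc unfolding BS_def by auto
  then have "strict (restr le (slice g z)) v (osucc g, z)"
    using v BS_subset_slice top_in_slice unfolding strict_def restr_def by blast
  then obtain y where "restr le (slice g z) v (g, y)" using O3 by blast
  then show ?thesis using that mid_in_slice_iff unfolding restr_def by blast
qed

lemma ground_point_below_block:
  assumes zl: "z < l" and x: "x \<in> omega_block z"
  obtains n where "le (ozero, ord_of_nat n) (g, x)"
proof -
  have "(g, x) \<in> Y l g" using block_less[OF zl x] unfolding Y_def by blast
  then have "infinite {s \<in> level (Y l g) ozero. strict le s (g, x)}"
    using LCS_poset_infinite_below[OF LCS_Y] ozero_less_g by simp
  then obtain u where u: "u \<in> level (Y l g) ozero" "strict le u (g, x)"
    by (metis (no_types, lifting) empty_Collect_eq finite.emptyI)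
  have uY: "u \<in> Y l g" and fu: "fst u = ozero" using u(1) unfolding level_def by auto
  have "fst u \<noteq> g" "fst u \<noteq> osucc g"
    using fu ozero_less_g order.strict_trans[OF ozero_less_g g_less_osucc] by auto
  then have "snd u < oomega" using uY unfolding Y_def by auto
  then obtain n where "snd u = ord_of_nat n"
    using ord_of_nat_range by (metis imageE mem_Collect_eq)
  then have "u = (ozero, ord_of_nat n)" using fu by (metis prod.collapse)
  then show ?thesis using that u(2) unfolding strict_def by blast
qed

lemma meet_of_tops_in_BS:
  assumes zl: "z < l" and wl: "w < l" and "z \<noteq> w" and v: "v \<in> i {(osucc g, z), (osucc g, w)}"
  shows "v \<in> BS g"
proof -
  have ne: "(osucc g, z) \<noteq> (osucc g, w)" using \<open>z \<noteq> w\<close> by simp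
  have low: "le v (osucc g, z)" "le v (osucc g, w)"
    using LCS_poset_meet_lower[OF LCS_Y top_in_Y[OF zl] top_in_Y[OF wl] ne v] by auto
  have "v \<noteq> (osucc g, z)"
    using low(2) ne LCS_poset_strict_fst[OF LCS_Y, of "(osucc g, z)" "(osucc g, w)"] unfolding strict_def by auto
  moreover have "v \<noteq> (osucc g, w)"
    using low(1) ne LCS_poset_strict_fst[OF LCS_Y, of "(osucc g, w)" "(osucc g, z)"] unfolding strict_def by auto
  ultimately have strict: "strict le v (osucc g, z)" "strict le v (osucc g, w)"
    using low unfolding strict_def by auto
  have vY: "v \<in> Y l g" using LCS_poset_mem[OF LCS_Y low(1)] by blast
  have "fst v < osucc g" using LCS_poset_strict_fst[OF LCS_Y strict(1)] by simp
  then have "fst v \<le> g" using less_osucc_imp_le[OF g_less_osucc] by blast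
  moreover have "fst v \<noteq> g"
  proof
    assume fv: "fst v = g"
    then have "snd v < l" using vY g_less_osucc unfolding Y_def by auto
    then obtain z' where z': "z' < l" "snd v \<in> omega_block z'" using blocks_cover by blast
    have veq: "v = (g, snd v)" using fv by (metis prod.collapse)
    have "z = z'" using block_not_below_other_top[OF z'] strict(1) veq by metis
    moreover have "w = z'" using block_not_below_other_top[OF z'] strict(2) veq by metis
    ultimately show False using \<open>z \<noteq> w\<close> by simp
  qed
  ultimately have "fst v < g" by simp
  then show ?thesis using vY g_less_osucc unfolding Y_def BS_def by auto
qed

definition trace :: "'o \<Rightarrow> nat set" where
  "trace z = {n. le (ozero, ord_of_nat n) (osucc g, z)}"

lemma inj_on_trace: "inj_on trace {z. z < l}"
proof (rule inj_onI, rule ccontr)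
  fix z w assume "z \<in> {z. z < l}" "w \<in> {z. z < l}" and eq: "trace z = trace w" and "z \<noteq> w"
  then have zl: "z < l" and wl: "w < l" by auto
  have ne: "(osucc g, z) \<noteq> (osucc g, w)" using \<open>z \<noteq> w\<close> by simp
  define W where "W = i {(osucc g, z), (osucc g, w)}"
  have "finite W"
    unfolding W_def using LCS_poset_finite_meet[OF LCS_Y top_in_Y[OF zl] top_in_Y[OF wl] ne] .
  have through_W: "\<exists>v\<in>W. \<exists>n. le (ozero, ord_of_nat n) (g, x) \<and> le (ozero, ord_of_nat n) v"
    if x: "x \<in> omega_block z" for x
  proof -
    obtain n where n: "le (ozero, ord_of_nat n) (g, x)" using ground_point_below_block[OF zl x] .
    then have "n \<in> trace z"
      using block_below_top[OF zl x] LCS_poset_trans[OF LCS_Y] unfolding trace_def strict_def by blast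
    then have "le (ozero, ord_of_nat n) (osucc g, w)" using eq unfolding trace_def by blast
    moreover have "le (ozero, ord_of_nat n) (osucc g, z)" using \<open>n \<in> trace z\<close> unfolding trace_def by blast
    ultimately show ?thesis
      using n LCS_poset_meet_cover[OF LCS_Y top_in_Y[OF zl] top_in_Y[OF wl] ne] unfolding W_def by blast
  qed
  then obtain V where V: "\<And>x. x \<in> omega_block z \<Longrightarrow>
      V x \<in> W \<and> (\<exists>n. le (ozero, ord_of_nat n) (g, x) \<and> le (ozero, ord_of_nat n) (V x))"
    by metis
  have "\<not> inj_on V (omega_block z)"
    using block_infinite[OF zl] \<open>finite W\<close> V finite_imageD finite_subset
    by (metis image_subsetI)
  then obtain x x' where xx': "x \<in> omega_block z" "x' \<in> omega_block z" "x \<noteq> x'" "V x = V x'"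
    unfolding inj_on_def by blast
  have "V x \<in> BS g" using meet_of_tops_in_BS[OF zl wl \<open>z \<noteq> w\<close>] V xx'(1) unfolding W_def by blast
  moreover have "le (V x) (osucc g, z)"
    using LCS_poset_meet_lower[OF LCS_Y top_in_Y[OF zl] top_in_Y[OF wl] ne] V xx'(1) unfolding W_def by blast
  ultimately obtain y where y: "y \<in> omega_block z" "le (V x) (g, y)"
    using below_top_through_block[OF zl] by blast
  have same: "x'' = y" if x'': "x'' \<in> omega_block z" and eqV: "V x'' = V x" for x''
  proof (rule ccontr)
    assume "x'' \<noteq> y"
    obtain n where "le (ozero, ord_of_nat n) (g, x'')" "le (ozero, ord_of_nat n) (V x)"
      using V[OF x''] eqV by auto
    then show False
      using block_points_no_common_lower_bound[OF zl x'' y(1) \<open>x'' \<noteq> y\<close> ground_in_BS]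
        LCS_poset_trans[OF LCS_Y _ y(2)] by blast
  qed
  show False using same[OF xx'(1)] same[OF xx'(2)] xx'(3,4) by simp
qed

end

section \<open>An almost disjoint family indexed by the blocks\<close>

definition prefix_code :: "nat set \<Rightarrow> nat \<Rightarrow> nat" where
  "prefix_code S n = to_nat (map (\<lambda>k. k \<in> S) [0..<n])"

lemma prefix_code_eq_iff:
  "prefix_code S n = prefix_code S' m \<longleftrightarrow> n = m \<and> (\<forall>k<n. k \<in> S \<longleftrightarrow> k \<in> S')"
proof
  assume "prefix_code S n = prefix_code S' m"
  then have eq: "map (\<lambda>k. k \<in> S) [0..<n] = map (\<lambda>k. k \<in> S') [0..<m]"
    unfolding prefix_code_def by simp
  then have "n = m" by (metis length_map length_upt minus_nat.diff_0)
  moreover have "k \<in> S \<longleftrightarrow> k \<in> S'" if "k < n" for k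
    using arg_cong[OF eq, of "\<lambda>xs. xs ! k"] that \<open>n = m\<close> by simp
  ultimately show "n = m \<and> (\<forall>k<n. k \<in> S \<longleftrightarrow> k \<in> S')" by blast
next
  assume "n = m \<and> (\<forall>k<n. k \<in> S \<longleftrightarrow> k \<in> S')"
  then show "prefix_code S n = prefix_code S' m" unfolding prefix_code_def by simp
qed

lemma inj_prefix_code: "inj (prefix_code S)"
  by (rule injI) (simp add: prefix_code_eq_iff)

lemma prefix_codes_almost_disjoint:
  assumes "S \<noteq> S'"
  shows "finite (range (prefix_code S) \<inter> range (prefix_code S'))"
proof -
  obtain k where k: "k \<in> S \<longleftrightarrow> k \<notin> S'" using assms by blast
  have "range (prefix_code S) \<inter> range (prefix_code S') \<subseteq> prefix_code S ` {..k}"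
  proof
    fix c assume "c \<in> range (prefix_code S) \<inter> range (prefix_code S')"
    then obtain n m where n: "c = prefix_code S n" and "c = prefix_code S' m" by blast
    then have "\<forall>k'<n. k' \<in> S \<longleftrightarrow> k' \<in> S'" using prefix_code_eq_iff by metis
    then have "n \<le> k" using k by (meson not_le)
    then show "c \<in> prefix_code S ` {..k}" using n by simp
  qed
  then show ?thesis using finite_subset by blast
qed

context adequate_omega1 begin

definition trace_codes :: "'o \<Rightarrow> nat set" where
  "trace_codes z = range (prefix_code (trace z))"

definition block_of :: "'o \<Rightarrow> 'o" where
  "block_of x = (SOME z. z < l \<and> x \<in> omega_block z)"

definition block_enum :: "'o \<Rightarrow> nat \<Rightarrow> 'o" where
  "block_enum z = (SOME f. bij_betw f (UNIV::nat set) (omega_block z))"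

definition block_index :: "'o \<Rightarrow> nat" where
  "block_index x = inv_into UNIV (block_enum (block_of x)) x"

text \<open>The codes of the prefixes of \<open>D\<^sub>\<zeta>\<close> whose length lies in the \<open>k\<close>-th column of
  \<open>prod_encode\<close> are given to the \<open>k\<close>-th point of the block \<open>\<zeta>\<close>.\<close>

definition branch_codes :: "'o \<Rightarrow> nat set" where
  "branch_codes x = range (\<lambda>j. prefix_code (trace (block_of x)) (prod_encode (block_index x, j)))"

lemma trace_codes_almost_disjoint:
  "z < l \<Longrightarrow> w < l \<Longrightarrow> z \<noteq> w \<Longrightarrow> finite (trace_codes z \<inter> trace_codes w)"
  unfolding trace_codes_def using inj_on_trace prefix_codes_almost_disjoint
  by (metis inj_onD mem_Collect_eq)

lemma block_of: "x < l \<Longrightarrow> block_of x < l \<and> x \<in> omega_block (block_of x)"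
  unfolding block_of_def using blocks_cover by (metis (mono_tags, lifting) someI_ex)

lemma block_of_eq: "z < l \<Longrightarrow> x \<in> omega_block z \<Longrightarrow> block_of x = z"
  using block_of block_less blocks_disjoint by blast

lemma bij_block_enum: "z < l \<Longrightarrow> bij_betw (block_enum z) UNIV (omega_block z)"
proof -
  assume zl: "z < l"
  have "(UNIV::nat set) \<approx> {y. y < (oomega::'o)}"
    using ord_of_nat_range ord_of_nat_strict_mono
    unfolding eqpoll_def by (metis bij_betw_imageI strict_mono_imp_inj_on)
  then have "\<exists>f. bij_betw f (UNIV::nat set) (omega_block z)"
    using block_eqpoll_omega[OF zl] eqpoll_sym eqpoll_trans unfolding eqpoll_def by metis
  then show ?thesis unfolding block_enum_def by (rule someI_ex)
qed

lemma block_enum_index: "x < l \<Longrightarrow> block_enum (block_of x) (block_index x) = x"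
  unfolding block_index_def using bij_block_enum block_of
  by (metis bij_betw_def f_inv_into_f)

lemma branch_codes_subset: "branch_codes x \<subseteq> trace_codes (block_of x)"
  unfolding branch_codes_def trace_codes_def by blast

lemma branch_codes_infinite: "infinite (branch_codes x)"
  unfolding branch_codes_def
  by (rule range_inj_infinite) (simp add: inj_def prefix_code_eq_iff)

lemma branch_codes_disjoint:
  assumes zl: "z < l" and x: "x \<in> omega_block z" and y: "y \<in> omega_block z" and "x \<noteq> y"
  shows "branch_codes x \<inter> branch_codes y = {}"
proof -
  have bx: "block_of x = z" and by': "block_of y = z" using block_of_eq zl x y by auto
  have "block_index x \<noteq> block_index y"
    using block_enum_index block_less[OF zl x] block_less[OF zl y] bx by' \<open>x \<noteq> y\<close> by metis
  then show ?thesis unfolding branch_codes_def bx by' by (auto simp: prefix_code_eq_iff)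
qed

lemma branch_codes_almost_disjoint:
  assumes xl: "x < l" and yl: "y < l" and "x \<noteq> y"
  shows "finite (branch_codes x \<inter> branch_codes y)"
proof (cases "block_of x = block_of y")
  case True
  then show ?thesis
    using branch_codes_disjoint[of "block_of x" x y] block_of[OF xl] block_of[OF yl] \<open>x \<noteq> y\<close> by simp
next
  case False
  then have "finite (trace_codes (block_of x) \<inter> trace_codes (block_of y))"
    using trace_codes_almost_disjoint block_of xl yl by blast
  then show ?thesis using branch_codes_subset finite_subset by (metis Int_mono)
qed

lemma trace_codes_eq_Union: "z < l \<Longrightarrow> trace_codes z = \<Union> (branch_codes ` omega_block z)"
proof
  assume zl: "z < l"
  show "\<Union> (branch_codes ` omega_block z) \<subseteq> trace_codes z" using branch_codes_subset block_of_eq[OF zl] by blast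
  show "trace_codes z \<subseteq> \<Union> (branch_codes ` omega_block z)"
  proof
    fix c assume "c \<in> trace_codes z"
    then obtain n where n: "c = prefix_code (trace z) n" unfolding trace_codes_def by blast
    obtain k j where kj: "n = prod_encode (k, j)" by (metis prod_decode_inverse surj_pair)
    define x where "x = block_enum z k"
    have x: "x \<in> omega_block z" using bij_block_enum[OF zl] unfolding x_def bij_betw_def by blast
    have bx: "block_of x = z" using block_of_eq[OF zl x] .
    have "block_index x = inv_into UNIV (block_enum z) x" unfolding block_index_def bx ..
    also have "\<dots> = k" unfolding x_def using bij_block_enum[OF zl] by (simp add: bij_betw_def inv_into_f_f)
    finally have "block_index x = k" .
    then have "c \<in> branch_codes x" unfolding branch_codes_def using bx n kj by blast
    then show "c \<in> \<Union> (branch_codes ` omega_block z)" using x by blast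
  qed
qed

lemma trace_branch_codes_almost_disjoint:
  assumes zl: "z < l" and xl: "x < l" and "x \<notin> omega_block z"
  shows "finite (trace_codes z \<inter> branch_codes x)"
proof -
  have "block_of x \<noteq> z" using block_of[OF xl] \<open>x \<notin> omega_block z\<close> by auto
  then have "finite (trace_codes z \<inter> trace_codes (block_of x))"
    using trace_codes_almost_disjoint zl block_of[OF xl] by blast
  then show ?thesis using branch_codes_subset finite_subset by (metis Int_mono order_refl)
qed

end

section \<open>Adequate posets from a forest and an almost disjoint family\<close>

text \<open>The levels below \<open>\<gamma>\<close> carry a forest on \<open>levels \<times> \<omega>\<close>: \<open>root_of u\<close> names the tree
  containing \<open>u\<close> and \<open>root j\<close> is the greatest point of tree \<open>j\<close>.\<close>

locale forest =
  fixes levels :: "nat set"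
    and tree_le :: "nat \<times> nat \<Rightarrow> nat \<times> nat \<Rightarrow> bool"
    and root_of :: "nat \<times> nat \<Rightarrow> nat"
    and root :: "nat \<Rightarrow> nat \<times> nat"
  assumes tree_refl: "tree_le u u"
    and tree_antisym: "tree_le u v \<Longrightarrow> tree_le v u \<Longrightarrow> u = v"
    and tree_trans: "tree_le u v \<Longrightarrow> tree_le v w \<Longrightarrow> tree_le u w"
    and tree_fst_le: "tree_le u v \<Longrightarrow> fst u \<le> fst v"
    and tree_same_level: "tree_le u v \<Longrightarrow> fst u = fst v \<Longrightarrow> u = v"
    and tree_root_eq: "tree_le u v \<Longrightarrow> root_of u = root_of v"
    and root_levels: "fst (root j) \<in> levels"
    and root_of_root: "root_of (root j) = j"
    and below_root: "fst u \<in> levels \<Longrightarrow> tree_le u (root (root_of u))"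
    and tree_linear_above: "tree_le w u \<Longrightarrow> tree_le w v \<Longrightarrow> tree_le u v \<or> tree_le v u"
    and infinite_root_fibre: "n \<in> levels \<Longrightarrow> infinite S \<Longrightarrow> infinite {a. root_of (n, a) \<in> S}"
    and infinite_tree_below: "m \<in> levels \<Longrightarrow> n < m \<Longrightarrow> infinite {a. tree_le (n, a) (m, b)}"
    and tree_step_down: "Suc m \<in> levels \<Longrightarrow> tree_le u (Suc m, b) \<Longrightarrow> fst u \<le> m \<Longrightarrow>
      \<exists>a. tree_le u (m, a) \<and> tree_le (m, a) (Suc m, b)"

datatype 'o pt = Low nat nat | Mid 'o | Top 'o

locale adequate_construction =
  adequate_omega1 l le i + forest lower_levels tree_le root_of root
  for l :: "'o::wellorder" and le i lower_levels tree_le root_of root +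
  fixes gam :: 'o
  assumes below_gam: "{a. a < gam} = ord_of_nat ` lower_levels"
    and gam_less_osucc: "gam < osucc gam"
    and osucc_gam_less: "osucc gam < osucc (osucc gam)"
    and osucc_ord_of_nat: "n \<in> lower_levels \<Longrightarrow>
      osucc (ord_of_nat n) = (if Suc n \<in> lower_levels then ord_of_nat (Suc n) else gam)"
    and lower_levels_0: "0 \<in> lower_levels"
    and lower_levels_top: "n \<in> lower_levels \<Longrightarrow> Suc n \<notin> lower_levels \<Longrightarrow> m \<in> lower_levels \<Longrightarrow> m = n"
begin

fun valid :: "'o pt \<Rightarrow> bool" where
  "valid (Low n a) = (n \<in> lower_levels)"
| "valid (Mid x) = (x < l)"
| "valid (Top z) = (z < l)"

fun emb :: "'o pt \<Rightarrow> 'o \<times> 'o" where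
  "emb (Low n a) = (ord_of_nat n, ord_of_nat a)"
| "emb (Mid x) = (gam, x)"
| "emb (Top z) = (osucc gam, z)"

fun lep :: "'o pt \<Rightarrow> 'o pt \<Rightarrow> bool" where
  "lep (Low n a) (Low m b) = tree_le (n, a) (m, b)"
| "lep (Low n a) (Mid x) = (root_of (n, a) \<in> branch_codes x)"
| "lep (Low n a) (Top z) = (root_of (n, a) \<in> trace_codes z)"
| "lep (Mid x) (Mid y) = (x = y)"
| "lep (Mid x) (Top z) = (x \<in> omega_block z)"
| "lep (Top z) (Top w) = (z = w)"
| "lep _ _ = False"

fun root_set :: "'o pt \<Rightarrow> nat set" where
  "root_set (Low n a) = {}"
| "root_set (Mid x) = branch_codes x"
| "root_set (Top z) = trace_codes z"

definition root_point :: "nat \<Rightarrow> 'o pt" where "root_point j = Low (fst (root j)) (snd (root j))"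

text \<open>Incomparable points meet in the tops of their common trees; almost disjointness of the
  root sets keeps this finite.\<close>

definition meet_pts :: "'o pt \<Rightarrow> 'o pt \<Rightarrow> 'o pt set" where
  "meet_pts u v = (if lep u v then {u} else if lep v u then {v} else root_point ` (root_set u \<inter> root_set v))"

definition pts :: "'o pt set" where "pts = {u. valid u}"

lemma ord_of_nat_lower: "n \<in> lower_levels \<Longrightarrow> ord_of_nat n < gam" using below_gam by blast
lemma below_gam_ord_of_nat: "a < gam \<Longrightarrow> \<exists>n\<in>lower_levels. a = ord_of_nat n" using below_gam by blast
lemma gam_ne_osucc[simp]: "gam \<noteq> osucc gam" "osucc gam \<noteq> gam" using gam_less_osucc by auto

lemma ord_of_nat_lower_ne: "n \<in> lower_levels \<Longrightarrow> ord_of_nat n \<noteq> gam \<and> ord_of_nat n \<noteq> osucc gam \<and> gam \<noteq> ord_of_nat n \<and> osucc gam \<noteq> ord_of_nat n"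
  using ord_of_nat_lower[of n] order.strict_trans[OF ord_of_nat_lower[of n] gam_less_osucc] by auto

lemma emb_inj: "valid u \<Longrightarrow> valid v \<Longrightarrow> emb u = emb v \<Longrightarrow> u = v"
  by (cases u; cases v) (auto dest: ord_of_nat_lower_ne)

lemma Y_eq_emb_pts: "Y l gam = emb ` pts"
proof
  show "Y l gam \<subseteq> emb ` pts"
  proof
    fix p assume "p \<in> Y l gam"
    then obtain a b where p: "p = (a, b)" and
      h: "(a < gam \<and> b < oomega) \<or> ((a = gam \<or> a = osucc gam) \<and> b < l)" unfolding Y_def by blast
    show "p \<in> emb ` pts"
    proof (cases "a < gam")
      case True
      then obtain n where n: "n \<in> lower_levels" "a = ord_of_nat n" using below_gam_ord_of_nat by blast
      have "b < oomega" using h True gam_less_osucc by auto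
      then obtain m where "b = ord_of_nat m" using ord_of_nat_range by (metis (mono_tags, lifting) imageE mem_Collect_eq)
      then have "p = emb (Low n m)" using p n by simp
      then show ?thesis unfolding pts_def using n by (intro image_eqI[of _ _ "Low n m"]) auto
    next
      case False
      then have "(a = gam \<or> a = osucc gam) \<and> b < l" using h by blast
      then show ?thesis unfolding pts_def using p
        by (metis emb.simps(2) emb.simps(3) image_eqI mem_Collect_eq valid.simps(2) valid.simps(3))
    qed
  qed
  show "emb ` pts \<subseteq> Y l gam"
  proof
    fix p assume "p \<in> emb ` pts"
    then obtain u where u: "valid u" "p = emb u" unfolding pts_def by blast
    show "p \<in> Y l gam"
    proof (cases u)
      case (Low n a)
      have "(ord_of_nat a::'o) < oomega" using ord_of_nat_range by blast
      then show ?thesis using u Low ord_of_nat_lower unfolding Y_def by auto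
    qed (use u in \<open>auto simp: Y_def\<close>)
  qed
qed

lemma lep_refl: "lep u u" by (cases u) (auto simp: tree_refl)

lemma lep_antisym: "lep u v \<Longrightarrow> lep v u \<Longrightarrow> u = v"
  by (cases u; cases v) (auto dest: tree_antisym)

lemma lep_trans: "valid u \<Longrightarrow> valid v \<Longrightarrow> valid w \<Longrightarrow> lep u v \<Longrightarrow> lep v w \<Longrightarrow> lep u w"
proof (cases u; cases v; cases w)
  fix n a m b x z
  assume "valid u" "valid v" "valid w" "lep u v" "lep v w" "u = Low n a" "v = Mid x" "w = Top z"
  then show "lep u w" using trace_codes_eq_Union by auto
qed (auto dest: tree_root_eq intro: tree_trans)

lemma lep_fst_emb_less: "valid u \<Longrightarrow> valid v \<Longrightarrow> lep u v \<Longrightarrow> u \<noteq> v \<Longrightarrow> fst (emb u) < fst (emb v)"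
proof (cases u; cases v)
  fix n a m b assume "lep u v" "u \<noteq> v" "u = Low n a" "v = Low m b"
  then have "n \<le> m" "n \<noteq> m" using tree_fst_le tree_same_level by fastforce+
  then show "fst (emb u) < fst (emb v)" using \<open>u = Low n a\<close> \<open>v = Low m b\<close> by simp
qed (auto dest: ord_of_nat_lower intro: order.strict_trans[OF _ gam_less_osucc] simp: gam_less_osucc)

lemma meet_pts_subset: "meet_pts u v \<subseteq> pts \<union> {u, v}"
  unfolding meet_pts_def pts_def root_point_def using root_levels by auto

lemma finite_root_set_Int: "valid u \<Longrightarrow> valid v \<Longrightarrow> u \<noteq> v \<Longrightarrow> \<not> lep u v \<Longrightarrow> \<not> lep v u \<Longrightarrow> finite (root_set u \<inter> root_set v)"
proof (cases u; cases v)
  fix x z assume "valid u" "valid v" "\<not> lep u v" "u = Mid x" "v = Top z"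
  then show "finite (root_set u \<inter> root_set v)" using trace_branch_codes_almost_disjoint[of z x] by (simp add: Int_commute)
next
  fix x z assume "valid u" "valid v" "\<not> lep v u" "u = Top z" "v = Mid x"
  then show "finite (root_set u \<inter> root_set v)" using trace_branch_codes_almost_disjoint[of z x] by simp
qed (auto intro: branch_codes_almost_disjoint trace_codes_almost_disjoint)

lemma finite_meet_pts: "valid u \<Longrightarrow> valid v \<Longrightarrow> u \<noteq> v \<Longrightarrow> finite (meet_pts u v)"
  unfolding meet_pts_def using finite_root_set_Int by auto

lemma root_point_below: "j \<in> root_set u \<Longrightarrow> lep (root_point j) u"
proof (cases u)
  case (Mid x)
  assume "j \<in> root_set u"
  then show ?thesis using Mid root_of_root[of j] unfolding root_point_def by simp
next
  case (Top z)
  assume "j \<in> root_set u"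
  then show ?thesis using Top root_of_root[of j] unfolding root_point_def by simp
qed simp

lemma meet_pts_lower: "w \<in> meet_pts u v \<Longrightarrow> lep w u \<and> lep w v"
  unfolding meet_pts_def using lep_refl root_point_below by (auto split: if_splits)

lemma meet_pts_cover:
  assumes vu: "valid u" and vv: "valid v" and vw: "valid w" and wu: "lep w u" and wv: "lep w v"
  shows "\<exists>w'\<in>meet_pts u v. lep w w'"
proof (cases "lep u v \<or> lep v u")
  case True
  then show ?thesis unfolding meet_pts_def using wu wv by auto
next
  case False
  then have nuv: "\<not> lep u v" "\<not> lep v u" by auto
  show ?thesis
  proof (cases w)
    case (Low n a)
    have nNL: "n \<in> lower_levels" using vw Low by simp
    have "root_of (n, a) \<in> root_set u \<inter> root_set v"
    proof (cases u; cases v)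
      fix n1 a1 n2 a2 assume "u = Low n1 a1" "v = Low n2 a2"
      then show ?thesis using wu wv Low nuv tree_linear_above by force
    next
      fix n1 a1 x assume u: "u = Low n1 a1" and v: "v = Mid x"
      then have "root_of (n1, a1) = root_of (n, a)" using wu Low tree_root_eq by simp
      then show ?thesis using wv u v Low nuv by simp
    next
      fix n1 a1 x assume u: "u = Low n1 a1" and v: "v = Top x"
      then have "root_of (n1, a1) = root_of (n, a)" using wu Low tree_root_eq by simp
      then show ?thesis using wv u v Low nuv by simp
    next
      fix n1 a1 x assume v: "v = Low n1 a1" and u: "u = Mid x"
      then have "root_of (n1, a1) = root_of (n, a)" using wv Low tree_root_eq by simp
      then show ?thesis using wu u v Low nuv by simp
    next
      fix n1 a1 x assume v: "v = Low n1 a1" and u: "u = Top x"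
      then have "root_of (n1, a1) = root_of (n, a)" using wv Low tree_root_eq by simp
      then show ?thesis using wu u v Low nuv by simp
    qed (use wu wv Low in auto)
    moreover have "lep w (root_point (root_of (n, a)))"
      using below_root[of "(n, a)"] nNL Low unfolding root_point_def by simp
    ultimately show ?thesis unfolding meet_pts_def using nuv by auto
  next
    case (Mid x)
    show ?thesis
    proof (cases u; cases v)
      fix z z' assume u: "u = Top z" and v: "v = Top z'"
      then have "x \<in> omega_block z" "x \<in> omega_block z'" using wu wv Mid by auto
      then have "z = z'" using blocks_disjoint vu vv u v by auto
      then show ?thesis using nuv u v by simp
    qed (use wu wv Mid nuv in auto)
  next
    case (Top z)
    then show ?thesis using wu wv nuv by (cases u; cases v) auto
  qed
qed

definition Yle :: "'o \<times> 'o \<Rightarrow> 'o \<times> 'o \<Rightarrow> bool" where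
  "Yle p q \<longleftrightarrow> (\<exists>u v. valid u \<and> valid v \<and> p = emb u \<and> q = emb v \<and> lep u v)"

definition Yinf :: "('o \<times> 'o) set \<Rightarrow> ('o \<times> 'o) set" where
  "Yinf S = {p. \<exists>u v. valid u \<and> valid v \<and> u \<noteq> v \<and> S = {emb u, emb v} \<and> p \<in> emb ` meet_pts u v}"

lemma Yle_emb[simp]: "valid u \<Longrightarrow> valid v \<Longrightarrow> Yle (emb u) (emb v) \<longleftrightarrow> lep u v"
  unfolding Yle_def using emb_inj by blast

lemma YleD: "Yle p q \<Longrightarrow> \<exists>u v. valid u \<and> valid v \<and> p = emb u \<and> q = emb v \<and> lep u v"
  unfolding Yle_def by blast

lemma meet_pts_commute: "valid u \<Longrightarrow> valid v \<Longrightarrow> u \<noteq> v \<Longrightarrow> meet_pts u v = meet_pts v u"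
  unfolding meet_pts_def using lep_antisym by (auto simp: Int_commute)

lemma Yinf_emb: assumes vu: "valid u" and vv: "valid v" and ne: "u \<noteq> v"
  shows "Yinf {emb u, emb v} = emb ` meet_pts u v"
proof
  show "emb ` meet_pts u v \<subseteq> Yinf {emb u, emb v}" unfolding Yinf_def using vu vv ne by blast
  show "Yinf {emb u, emb v} \<subseteq> emb ` meet_pts u v"
  proof
    fix p assume "p \<in> Yinf {emb u, emb v}"
    then obtain u' v' where h: "valid u'" "valid v'" "u' \<noteq> v'" "{emb u, emb v} = {emb u', emb v'}"
      "p \<in> emb ` meet_pts u' v'" unfolding Yinf_def by blast
    have "(u' = u \<and> v' = v) \<or> (u' = v \<and> v' = u)"
      using h(4) emb_inj[OF h(1) vu] emb_inj[OF h(1) vv] emb_inj[OF h(2) vu] emb_inj[OF h(2) vv]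
      by (metis doubleton_eq_iff)
    then show "p \<in> emb ` meet_pts u v" using h(5) meet_pts_commute[OF vu vv ne] by auto
  qed
qed

lemma fst_emb_le: "valid u \<Longrightarrow> fst (emb u) \<le> osucc gam"
  by (cases u) (use ord_of_nat_lower gam_less_osucc in \<open>auto intro: less_imp_le order.strict_trans\<close>)

lemma below_osucc_gam: "a < osucc gam \<Longrightarrow> a < gam \<or> a = gam"
  using less_osucc_imp_le[OF gam_less_osucc, of a] by auto

lemma infinite_lower_level_below: assumes vv: "valid v" and a: "a < fst (emb v)"
  shows "infinite {u. valid u \<and> fst (emb u) = a \<and> lep u v \<and> u \<noteq> v}"
proof -
  have injL: "inj (Low n)" for n by (simp add: inj_def)
  have gen: "infinite S \<Longrightarrow> inj f \<Longrightarrow> f ` S \<subseteq> T \<Longrightarrow> infinite T" for S T and f :: "'x \<Rightarrow> 'o pt"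
    using finite_imageD finite_subset by (metis inj_on_subset subset_UNIV)
  show ?thesis
  proof (cases v)
    case (Low m b)
    have mNL: "m \<in> lower_levels" using vv Low by simp
    have "a < gam" using a Low ord_of_nat_lower[OF mNL] by simp
    then obtain n where n: "n \<in> lower_levels" "a = ord_of_nat n" using below_gam_ord_of_nat by blast
    have nm: "n < m" using a Low n by simp
    show ?thesis
    proof (rule gen[OF infinite_tree_below[OF mNL nm, of b] injL])
      show "Low n ` {a. tree_le (n, a) (m, b)} \<subseteq> {u. valid u \<and> fst (emb u) = a \<and> lep u v \<and> u \<noteq> v}"
        using n nm Low by auto
    qed
  next
    case (Mid x)
    have xl: "x < l" using vv Mid by simp
    have "a < gam" using a Mid by simp
    then obtain n where n: "n \<in> lower_levels" "a = ord_of_nat n" using below_gam_ord_of_nat by blast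
    show ?thesis
    proof (rule gen[OF infinite_root_fibre[OF n(1) branch_codes_infinite[of x]] injL])
      show "Low n ` {a. root_of (n, a) \<in> branch_codes x} \<subseteq> {u. valid u \<and> fst (emb u) = a \<and> lep u v \<and> u \<noteq> v}"
        using n Mid by auto
    qed
  next
    case (Top z)
    have zl: "z < l" using vv Top by simp
    have "a < osucc gam" using a Top by simp
    then consider "a < gam" | "a = gam" using below_osucc_gam by blast
    then show ?thesis
    proof cases
      case 1
      then obtain n where n: "n \<in> lower_levels" "a = ord_of_nat n" using below_gam_ord_of_nat by blast
      obtain x where x: "x \<in> omega_block z" using block_infinite[OF zl] by (metis finite.emptyI ex_in_conv)
      have "branch_codes x \<subseteq> trace_codes z" using trace_codes_eq_Union[OF zl] x by blast
      then have Ainf: "infinite (trace_codes z)" using branch_codes_infinite[of x] finite_subset by blast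
      show ?thesis
      proof (rule gen[OF infinite_root_fibre[OF n(1) Ainf] injL])
        show "Low n ` {a. root_of (n, a) \<in> trace_codes z} \<subseteq> {u. valid u \<and> fst (emb u) = a \<and> lep u v \<and> u \<noteq> v}"
          using n Top by auto
      qed
    next
      case 2
      have injM: "inj (Mid :: 'o \<Rightarrow> 'o pt)" by (simp add: inj_def)
      show ?thesis
      proof (rule gen[OF block_infinite[OF zl] injM])
        show "Mid ` omega_block z \<subseteq> {u. valid u \<and> fst (emb u) = a \<and> lep u v \<and> u \<noteq> v}"
          using 2 Top block_less[OF zl] by auto
      qed
    qed
  qed
qed

lemma emb_inj_on: "inj_on emb pts"
  unfolding pts_def inj_on_def using emb_inj by blast

lemma Yle_antisym: "Yle s t \<Longrightarrow> Yle t s \<Longrightarrow> s = t"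
  using lep_antisym unfolding Yle_def by (metis emb_inj)

lemma Yle_trans: "Yle s t \<Longrightarrow> Yle t u \<Longrightarrow> Yle s u"
  unfolding Yle_def by (metis emb_inj lep_trans)

lemma strict_Yle_fst_less: "strict Yle s t \<Longrightarrow> fst s < fst t"
  unfolding strict_def Yle_def using lep_fst_emb_less by blast

lemma fst_emb_pts_downward: "b \<in> fst ` emb ` pts \<Longrightarrow> a < b \<Longrightarrow> a \<in> fst ` emb ` pts"
proof -
  assume "b \<in> fst ` emb ` pts" "a < b"
  then have "a < osucc gam" using fst_emb_le unfolding pts_def by (force intro: order.strict_trans2)
  then consider "a < gam" | "a = gam" using below_osucc_gam by blast
  then show "a \<in> fst ` emb ` pts"
  proof cases
    case 1
    then obtain n where n: "n \<in> lower_levels" "a = ord_of_nat n" using below_gam_ord_of_nat by blast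
    then have "emb (Low n 0) \<in> emb ` pts" unfolding pts_def by (intro imageI) simp
    moreover have "a = fst (emb (Low n 0))" using n(2) by simp
    ultimately show ?thesis by blast
  next
    case 2
    have "emb (Mid ozero) \<in> emb ` pts" unfolding pts_def using ozero_less_l by (intro imageI) simp
    moreover have "a = fst (emb (Mid ozero))" using 2 by simp
    ultimately show ?thesis by blast
  qed
qed

lemma infinite_strictly_below_in_Y:
  assumes "t \<in> emb ` pts" and a: "a < fst t"
  shows "infinite {s \<in> level (emb ` pts) a. strict Yle s t}"
proof -
  obtain v where v: "valid v" "t = emb v" using assms(1) unfolding pts_def by blast
  let ?S = "{u. valid u \<and> fst (emb u) = a \<and> lep u v \<and> u \<noteq> v}"
  have "inj_on emb ?S" using emb_inj_on unfolding pts_def by (rule inj_on_subset) blast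
  then have "infinite (emb ` ?S)" using infinite_lower_level_below v a finite_imageD by blast
  moreover have "emb ` ?S \<subseteq> {s \<in> level (emb ` pts) a. strict Yle s t}"
    unfolding level_def strict_def pts_def using v emb_inj by auto
  ultimately show ?thesis using finite_subset by blast
qed

lemma Yinf_meet:
  assumes s: "s \<in> emb ` pts" and t: "t \<in> emb ` pts" and "s \<noteq> t"
  shows "finite (Yinf {s, t}) \<and> Yinf {s, t} \<subseteq> emb ` pts \<and>
    (\<forall>v\<in>Yinf {s, t}. Yle v s \<and> Yle v t) \<and> (\<forall>u. Yle u s \<and> Yle u t \<longrightarrow> (\<exists>v\<in>Yinf {s, t}. Yle u v))"
proof (intro conjI allI impI)
  obtain u v where uv: "valid u" "valid v" "s = emb u" "t = emb v" using s t unfolding pts_def by blast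
  have une: "u \<noteq> v" using \<open>s \<noteq> t\<close> uv by blast
  have Yinf: "Yinf {s, t} = emb ` meet_pts u v" using Yinf_emb[OF uv(1,2) une] uv by simp
  have meet_valid: "meet_pts u v \<subseteq> pts" using meet_pts_subset[of u v] uv unfolding pts_def by blast
  show "finite (Yinf {s, t})" unfolding Yinf using finite_meet_pts[OF uv(1,2) une] by simp
  show "Yinf {s, t} \<subseteq> emb ` pts" unfolding Yinf using meet_valid by blast
  show "\<forall>w\<in>Yinf {s, t}. Yle w s \<and> Yle w t"
    unfolding Yinf using meet_valid meet_pts_lower uv unfolding pts_def by fastforce
  fix w assume "Yle w s \<and> Yle w t"
  then obtain w' where w': "valid w'" "w = emb w'" "lep w' u" "lep w' v"
    using uv emb_inj unfolding Yle_def by metis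
  obtain x where x: "x \<in> meet_pts u v" "lep w' x" using meet_pts_cover[OF uv(1,2) w'(1,3,4)] by blast
  have "valid x" using meet_valid x(1) unfolding pts_def by blast
  then have "Yle w (emb x)" using x(2) w' by simp
  then show "\<exists>v\<in>Yinf {s, t}. Yle w v" unfolding Yinf using x(1) by blast
qed

theorem LCS_poset_Y: "LCS_poset (Y l gam) Yle Yinf"
  unfolding LCS_poset_def Y_eq_emb_pts
proof (intro conjI)
  show "\<forall>s t. Yle s t \<longrightarrow> s \<in> emb ` pts \<and> t \<in> emb ` pts" unfolding Yle_def pts_def by blast
  show "\<forall>s\<in>emb ` pts. Yle s s" unfolding pts_def using lep_refl by auto
  show "\<forall>s t. Yle s t \<and> Yle t s \<longrightarrow> s = t" using Yle_antisym by blast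
  show "\<forall>s t u. Yle s t \<and> Yle t u \<longrightarrow> Yle s u" using Yle_trans by blast
  have "Low 0 0 \<in> pts" unfolding pts_def using lower_levels_0 by simp
  then show "emb ` pts \<noteq> {}" by blast
  show "\<forall>a b. b \<in> fst ` emb ` pts \<and> a < b \<longrightarrow> a \<in> fst ` emb ` pts"
    using fst_emb_pts_downward by blast
  show "\<forall>s t. strict Yle s t \<longrightarrow> fst s < fst t" using strict_Yle_fst_less by blast
  show "\<forall>t\<in>emb ` pts. \<forall>a. a < fst t \<longrightarrow> infinite {s \<in> level (emb ` pts) a. strict Yle s t}"
    using infinite_strictly_below_in_Y by blast
  show "\<forall>s\<in>emb ` pts. \<forall>t\<in>emb ` pts. s \<noteq> t \<longrightarrow>
      finite (Yinf {s, t}) \<and> Yinf {s, t} \<subseteq> emb ` pts \<and>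
      (\<forall>v\<in>Yinf {s, t}. Yle v s \<and> Yle v t) \<and> (\<forall>u. Yle u s \<and> Yle u t \<longrightarrow> (\<exists>v\<in>Yinf {s, t}. Yle u v))"
    using Yinf_meet by blast
qed

lemma mem_slice: "p \<in> slice gam z \<longleftrightarrow> (fst p < gam \<and> snd p < oomega) \<or> (fst p = gam \<and> snd p \<in> omega_block z) \<or> p = (osucc gam, z)"
  unfolding slice_def BS_def Bz_def omega_block_def by (cases p) auto

definition slice_pts :: "'o \<Rightarrow> 'o pt set" where
  "slice_pts z = {u. valid u \<and> (case u of Low n a \<Rightarrow> True | Mid x \<Rightarrow> x \<in> omega_block z | Top w \<Rightarrow> w = z)}"

lemma slice_eq_emb: assumes zl: "z < l" shows "slice gam z = emb ` slice_pts z"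
proof
  show "slice gam z \<subseteq> emb ` slice_pts z"
  proof
    fix p assume p: "p \<in> slice gam z"
    obtain a b where ab: "p = (a, b)" by (cases p)
    consider "a < gam \<and> b < oomega" | "a = gam \<and> b \<in> omega_block z" | "p = (osucc gam, z)"
      using p[unfolded mem_slice] ab by auto
    then show "p \<in> emb ` slice_pts z"
    proof cases
      case 1
      then obtain n where n: "n \<in> lower_levels" "a = ord_of_nat n" using below_gam_ord_of_nat by blast
      obtain m where m: "b = ord_of_nat m" using 1 ord_of_nat_range by (metis (mono_tags, lifting) imageE mem_Collect_eq)
      have "Low n m \<in> slice_pts z" unfolding slice_pts_def using n by simp
      moreover have "p = emb (Low n m)" using ab n m by simp
      ultimately show ?thesis by blast
    next
      case 2
      have "Mid b \<in> slice_pts z" unfolding slice_pts_def using 2 block_less[OF zl] by simp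
      moreover have "p = emb (Mid b)" using ab 2 by simp
      ultimately show ?thesis by blast
    next
      case 3
      have "Top z \<in> slice_pts z" unfolding slice_pts_def using zl by simp
      moreover have "p = emb (Top z)" using 3 by simp
      ultimately show ?thesis by blast
    qed
  qed
  show "emb ` slice_pts z \<subseteq> slice gam z"
  proof
    fix p assume "p \<in> emb ` slice_pts z"
    then obtain u where u: "u \<in> slice_pts z" "p = emb u" by blast
    show "p \<in> slice gam z"
    proof (cases u)
      case (Low n a)
      have "(ord_of_nat a::'o) < oomega" using ord_of_nat_range by blast
      then show ?thesis using u Low ord_of_nat_lower unfolding mem_slice slice_pts_def by auto
    qed (use u in \<open>auto simp: mem_slice slice_pts_def\<close>)
  qed
qed

lemma slice_pts_valid_subset: "slice_pts z \<subseteq> pts" unfolding slice_pts_def pts_def by blast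

lemma slice_subset_Y: "z < l \<Longrightarrow> slice gam z \<subseteq> Y l gam"
  unfolding Y_eq_emb_pts using slice_eq_emb slice_pts_valid_subset image_mono by metis

lemma emb_eq_Mid: "valid u \<Longrightarrow> emb u = (gam, y) \<Longrightarrow> u = Mid y"
  by (cases u) (auto dest: ord_of_nat_lower_ne)
lemma emb_eq_Top: "valid u \<Longrightarrow> emb u = (osucc gam, y) \<Longrightarrow> u = Top y"
  by (cases u) (auto dest: ord_of_nat_lower_ne)
lemma emb_eq_Low: "valid u \<Longrightarrow> n \<in> lower_levels \<Longrightarrow> emb u = (ord_of_nat n, b) \<Longrightarrow> \<exists>a. u = Low n a \<and> b = ord_of_nat a"
  by (cases u) (auto dest: ord_of_nat_lower_ne)

lemma slice_pts_valid: "u \<in> slice_pts z \<Longrightarrow> valid u" unfolding slice_pts_def by blast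

lemma meet_pts_slice: "u \<in> slice_pts z \<Longrightarrow> v \<in> slice_pts z \<Longrightarrow> meet_pts u v \<subseteq> slice_pts z"
  unfolding meet_pts_def root_point_def slice_pts_def using root_levels by auto

lemma lep_slice_pts: "lep w v \<Longrightarrow> valid w \<Longrightarrow> v \<in> slice_pts z \<Longrightarrow> w \<in> slice_pts z"
  by (cases w; cases v) (auto simp: slice_pts_def)

lemma slice_emb: "z < l \<Longrightarrow> p \<in> slice gam z \<Longrightarrow> \<exists>u\<in>slice_pts z. p = emb u"
  using slice_eq_emb by blast

lemma closed_under_slice: assumes zl: "z < l" shows "closed_under Yinf (slice gam z)"
  unfolding closed_under_def
proof (intro ballI impI)
  fix s t assume s: "s \<in> slice gam z" and t: "t \<in> slice gam z" and st: "s \<noteq> t"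
  obtain u where u: "u \<in> slice_pts z" "s = emb u" using slice_emb[OF zl s] by blast
  obtain v where v: "v \<in> slice_pts z" "t = emb v" using slice_emb[OF zl t] by blast
  have ne: "u \<noteq> v" using st u v by blast
  have "Yinf {s, t} = emb ` meet_pts u v" using Yinf_emb[OF slice_pts_valid[OF u(1)] slice_pts_valid[OF v(1)] ne] u v by simp
  also have "\<dots> \<subseteq> emb ` slice_pts z" using meet_pts_slice[OF u(1) v(1)] by blast
  finally show "Yinf {s, t} \<subseteq> slice gam z" using slice_eq_emb[OF zl] by simp
qed

lemma slice_downward_closed: assumes zl: "z < l" shows "\<forall>p t. Yle p t \<and> t \<in> slice gam z \<longrightarrow> p \<in> slice gam z"
proof (intro allI impI)
  fix p t assume h: "Yle p t \<and> t \<in> slice gam z"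
  obtain w v where wv: "valid w" "valid v" "p = emb w" "t = emb v" "lep w v" using YleD h by blast
  obtain v' where v': "v' \<in> slice_pts z" "t = emb v'" using slice_emb[OF zl] h by blast
  have "v = v'" using emb_inj[OF wv(2) slice_pts_valid[OF v'(1)]] wv(4) v'(2) by simp
  then have "w \<in> slice_pts z" using lep_slice_pts[OF wv(5) wv(1)] v'(1) by simp
  then show "p \<in> slice gam z" using slice_eq_emb[OF zl] wv(3) by blast
qed

lemma block_nonempty: "z < l \<Longrightarrow> \<exists>x. x \<in> omega_block z"
  using block_infinite by (metis finite.emptyI ex_in_conv)

lemma fst_slice: assumes zl: "z < l" shows "fst ` slice gam z = {a. a \<le> osucc gam}"
proof
  show "fst ` slice gam z \<subseteq> {a. a \<le> osucc gam}"
  proof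
    fix a assume "a \<in> fst ` slice gam z"
    then obtain u where "u \<in> slice_pts z" "a = fst (emb u)" using slice_eq_emb[OF zl] by auto
    then show "a \<in> {a. a \<le> osucc gam}" using fst_emb_le slice_pts_valid by blast
  qed
  show "{a. a \<le> osucc gam} \<subseteq> fst ` slice gam z"
  proof
    fix a assume a: "a \<in> {a. a \<le> osucc gam}"
    then consider "a < gam" | "a = gam" | "a = osucc gam"
      using below_osucc_gam by (metis mem_Collect_eq order.order_iff_strict)
    then show "a \<in> fst ` slice gam z"
    proof cases
      case 1
      have "(ozero::'o) < oomega" using ord_of_nat_range ord_of_nat_0 by (metis rangeI mem_Collect_eq)
      then have "(a, ozero) \<in> slice gam z" using 1 unfolding mem_slice by simp
      then show ?thesis by (metis fst_conv image_eqI)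
    next
      case 2
      obtain x where "x \<in> omega_block z" using block_nonempty[OF zl] by blast
      then have "(a, x) \<in> slice gam z" using 2 unfolding mem_slice by simp
      then show ?thesis by (metis fst_conv image_eqI)
    next
      case 3
      then have "(a, z) \<in> slice gam z" unfolding mem_slice by simp
      then show ?thesis by (metis fst_conv image_eqI)
    qed
  qed
qed

lemma LCS_poset_slice: assumes zl: "z < l" shows "LCS_poset (slice gam z) (restr Yle (slice gam z)) Yinf"
proof (rule LCS_poset_restr[OF LCS_poset_Y slice_subset_Y[OF zl] closed_under_slice[OF zl] slice_downward_closed[OF zl]])
  show "slice gam z \<noteq> {}" using fst_slice[OF zl] by (metis empty_iff image_empty mem_Collect_eq order_refl)
  show "\<forall>a b. b \<in> fst ` slice gam z \<and> a < b \<longrightarrow> a \<in> fst ` slice gam z" unfolding fst_slice[OF zl] by auto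
qed

lemma level_slice_lower: "a < gam \<Longrightarrow> level (slice gam z) a = {a} \<times> {y. y < oomega}"
  unfolding level_def mem_slice using gam_less_osucc by (auto simp: order.strict_iff_order)

lemma level_slice_gam: "level (slice gam z) gam = {gam} \<times> omega_block z"
  unfolding level_def mem_slice by auto

lemma level_slice_top: "level (slice gam z) (osucc gam) = {(osucc gam, z)}"
  unfolding level_def mem_slice using gam_less_osucc by auto

lemma countable_below_oomega: "countable {y::'o. y < oomega}"
proof -
  have "countable (range (ord_of_nat::nat \<Rightarrow> 'o))" by simp
  then show ?thesis using ord_of_nat_range by simp
qed

lemma block_countable: "z < l \<Longrightarrow> countable (omega_block z)"
  using countable_eqpoll[OF countable_below_oomega block_eqpoll_omega] by blast

lemma has_cardseq_slice: assumes zl: "z < l"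
  shows "has_cardseq (slice gam z) {a. a \<le> osucc gam} (\<lambda>a. if a \<le> gam then oomega else oone)"
  unfolding has_cardseq_def
proof (intro conjI ballI)
  show "fst ` slice gam z = {a. a \<le> osucc gam}" by (rule fst_slice[OF zl])
  fix a assume a: "a \<in> {a. a \<le> osucc gam}"
  then consider "a < gam" | "a = gam" | "a = osucc gam"
    using below_osucc_gam by (metis mem_Collect_eq order.order_iff_strict)
  then show "level (slice gam z) a \<approx> {y. y < (if a \<le> gam then (oomega::'o) else oone)}"
  proof cases
    case 1
    have "a \<le> gam" using 1 by simp
    have "level (slice gam z) a \<approx> {y::'o. y < oomega}"
      apply (subst level_slice_lower) apply (rule 1)
      apply (rule times_singleton_eqpoll)
      done
    then show ?thesis using \<open>a \<le> gam\<close> by simp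
  next
    case 2
    have "{gam} \<times> omega_block z \<approx> omega_block z" by (rule times_singleton_eqpoll)
    then have "{gam} \<times> omega_block z \<approx> {y::'o. y < oomega}" using block_eqpoll_omega[OF zl] eqpoll_trans by blast
    then show ?thesis unfolding 2 level_slice_gam by simp
  next
    case 3
    have "\<not> osucc gam \<le> gam" using gam_less_osucc by simp
    then show ?thesis unfolding 3 level_slice_top using below_oone singleton_eqpoll by simp
  qed
qed

lemma Yinf_same_lower_level: assumes n: "n \<in> lower_levels" and ne: "c \<noteq> d"
  shows "Yinf {(ord_of_nat n, ord_of_nat c), (ord_of_nat n, ord_of_nat d)} = {}"
proof -
  have "Yinf {emb (Low n c), emb (Low n d)} = emb ` meet_pts (Low n c) (Low n d)"
    by (rule Yinf_emb) (use n ne in auto)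
  moreover have "meet_pts (Low n c) (Low n d) = {}"
  proof -
    have "\<not> tree_le (n, c) (n, d)" using tree_same_level[of "(n, c)" "(n, d)"] ne by auto
    moreover have "\<not> tree_le (n, d) (n, c)" using tree_same_level[of "(n, d)" "(n, c)"] ne by auto
    ultimately show ?thesis unfolding meet_pts_def by simp
  qed
  ultimately show ?thesis by simp
qed

lemma Yinf_same_mid_level: assumes zl: "z < l" and x: "x \<in> omega_block z" and y: "y \<in> omega_block z" and ne: "x \<noteq> y"
  shows "Yinf {(gam, x), (gam, y)} = {}"
proof -
  have "Yinf {emb (Mid x), emb (Mid y)} = emb ` meet_pts (Mid x) (Mid y)"
    by (rule Yinf_emb) (use ne block_less[OF zl x] block_less[OF zl y] in auto)
  moreover have "meet_pts (Mid x) (Mid y) = {}"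
    unfolding meet_pts_def using branch_codes_disjoint[OF zl x y ne] ne by simp
  ultimately show ?thesis by simp
qed

lemma strict_restr_slice_D: "z < l \<Longrightarrow> strict (restr Yle (slice gam z)) s t \<Longrightarrow>
   \<exists>w v. w \<in> slice_pts z \<and> v \<in> slice_pts z \<and> s = emb w \<and> t = emb v \<and> lep w v \<and> w \<noteq> v"
proof -
  assume zl: "z < l" and h: "strict (restr Yle (slice gam z)) s t"
  then have sS: "s \<in> slice gam z" and tS: "t \<in> slice gam z" and le: "Yle s t" and ne: "s \<noteq> t"
    unfolding strict_def restr_def by auto
  obtain w where w: "w \<in> slice_pts z" "s = emb w" using slice_emb[OF zl sS] by blast
  obtain v where v: "v \<in> slice_pts z" "t = emb v" using slice_emb[OF zl tS] by blast
  have "lep w v" using le w v slice_pts_valid by simp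
  then show ?thesis using w v ne by blast
qed

lemma restr_slice_emb: "z < l \<Longrightarrow> w \<in> slice_pts z \<Longrightarrow> v \<in> slice_pts z \<Longrightarrow> lep w v \<Longrightarrow> restr Yle (slice gam z) (emb w) (emb v)"
  unfolding restr_def using slice_eq_emb slice_pts_valid by auto

lemma strict_restr_slice_emb: "z < l \<Longrightarrow> w \<in> slice_pts z \<Longrightarrow> v \<in> slice_pts z \<Longrightarrow> lep w v \<Longrightarrow> w \<noteq> v \<Longrightarrow>
    strict (restr Yle (slice gam z)) (emb w) (emb v)"
  unfolding strict_def using restr_slice_emb emb_inj slice_pts_valid by blast

lemma lev_set_slice: "lev_set (slice gam z) a \<subseteq> {y. y < oomega} \<union> omega_block z \<union> {z}"
  unfolding lev_set_def mem_slice by auto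

lemma countable_lev_set_slice: "z < l \<Longrightarrow> countable (lev_set (slice gam z) a)"
  using lev_set_slice countable_subset countable_below_oomega block_countable by (metis countable_Un countable_insert insert_is_Un sup_commute countable_empty)

lemma lep_through_level:
  assumes vw: "valid w" and vv: "valid v" and wv: "lep w v" "w \<noteq> v"
    and aL: "a \<le> osucc gam" and lev: "fst (emb v) = osucc a"
  obtains x where "valid x" "fst (emb x) = a" "lep w x" "lep x v" "x \<noteq> v"
proof -
  consider "a < gam" | "a = gam" | "a = osucc gam"
    using aL below_osucc_gam by (metis order.order_iff_strict)
  then show ?thesis
  proof cases
    case 1
    then obtain n where n: "n \<in> lower_levels" "a = ord_of_nat n" using below_gam_ord_of_nat by blast
    show ?thesis
    proof (cases "Suc n \<in> lower_levels")
      case True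
      have "fst (emb v) = ord_of_nat (Suc n)" using lev osucc_ord_of_nat[OF n(1)] True n(2) by simp
      then obtain b where b: "v = Low (Suc n) b"
        using emb_eq_Low[OF vv True, of "snd (emb v)"] by (metis prod.collapse)
      obtain m c where mc: "w = Low m c" using wv(1) b by (cases w) auto
      have tl: "tree_le (m, c) (Suc n, b)" using wv(1) b mc by simp
      have "m \<noteq> Suc n" using tree_same_level[OF tl] wv(2) b mc by auto
      then have "fst (m, c) \<le> n" using tree_fst_le[OF tl] by simp
      then obtain a' where a': "tree_le (m, c) (n, a')" "tree_le (n, a') (Suc n, b)"
        using tree_step_down[OF True tl] by blast
      show ?thesis by (rule that[of "Low n a'"]) (use n a' mc b in auto)
    next
      case False
      have "fst (emb v) = gam" using lev osucc_ord_of_nat[OF n(1)] False n(2) by simp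
      then have "v = Mid (snd (emb v))" using emb_eq_Mid[OF vv] by (metis prod.collapse)
      then obtain y where "v = Mid y" by blast
      then obtain m c where mc: "w = Low m c" using wv by (cases w) auto
      have "m = n" using vw mc lower_levels_top[OF n(1) False] by simp
      show ?thesis by (rule that[of w]) (use vw wv mc n \<open>m = n\<close> lep_refl in auto)
    qed
  next
    case 2
    then have "v = Top (snd (emb v))" using emb_eq_Top[OF vv] lev by (metis prod.collapse)
    then obtain z where v: "v = Top z" "z < l" using vv by (metis valid.simps(3))
    show ?thesis
    proof (cases w)
      case (Low m c)
      then have "root_of (m, c) \<in> trace_codes z" using wv(1) v by simp
      then obtain x where x: "x \<in> omega_block z" "root_of (m, c) \<in> branch_codes x"
        using trace_codes_eq_Union[OF v(2)] by blast
      show ?thesis by (rule that[of "Mid x"]) (use x Low v 2 block_less[OF v(2) x(1)] in auto)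
    next
      case (Mid x)
      show ?thesis by (rule that[of w]) (use vw wv Mid 2 lep_refl in auto)
    next
      case (Top w')
      then show ?thesis using wv v by simp
    qed
  next
    case 3
    then show ?thesis using lev fst_emb_le[OF vv] osucc_gam_less by (metis leD)
  qed
qed

lemma skeleton_successor_slice:
  assumes zl: "z < l" and aL: "a \<le> osucc gam"
    and t: "t \<in> level (slice gam z) (osucc a)" and st: "strict (restr Yle (slice gam z)) s t"
  shows "\<exists>x\<in>lev_set (slice gam z) a. restr Yle (slice gam z) s (a, x) \<and> strict (restr Yle (slice gam z)) (a, x) t"
proof -
  obtain w v where wv: "w \<in> slice_pts z" "v \<in> slice_pts z" "s = emb w" "t = emb v" "lep w v" "w \<noteq> v"
    using strict_restr_slice_D[OF zl st] by blast
  have "fst (emb v) = osucc a" using t wv(4) unfolding level_def by simp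
  then obtain x where x: "valid x" "fst (emb x) = a" "lep w x" "lep x v" "x \<noteq> v"
    using lep_through_level[OF slice_pts_valid[OF wv(1)] slice_pts_valid[OF wv(2)] wv(5,6) aL] by blast
  have xz: "x \<in> slice_pts z" using lep_slice_pts[OF x(4,1) wv(2)] .
  have ex: "emb x = (a, snd (emb x))" using x(2) by (metis prod.collapse)
  have "snd (emb x) \<in> lev_set (slice gam z) a"
    using slice_eq_emb[OF zl] xz ex unfolding lev_set_def by (metis image_eqI mem_Collect_eq)
  moreover have "restr Yle (slice gam z) s (emb x)" using restr_slice_emb[OF zl wv(1) xz x(3)] wv(3) by simp
  moreover have "strict (restr Yle (slice gam z)) (emb x) t"
    using strict_restr_slice_emb[OF zl xz wv(2) x(4,5)] wv(4) by simp
  ultimately show ?thesis using ex by metis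
qed

lemma skeleton_meet_empty_slice: assumes zl: "z < l" and aL: "a \<le> osucc gam"
  and x: "x \<in> lev_set (slice gam z) a" and y: "y \<in> lev_set (slice gam z) a" and ne: "x \<noteq> y"
  shows "Yinf {(a, x), (a, y)} = {}"
proof -
  have xS: "(a, x) \<in> slice gam z" and yS: "(a, y) \<in> slice gam z" using x y unfolding lev_set_def by auto
  consider "a < gam" | "a = gam" | "a = osucc gam"
    using aL below_osucc_gam by (metis order.order_iff_strict)
  then show ?thesis
  proof cases
    case 1
    then obtain n where n: "n \<in> lower_levels" "a = ord_of_nat n" using below_gam_ord_of_nat by blast
    have "x < oomega" "y < oomega" using xS yS 1 gam_less_osucc unfolding mem_slice by auto
    then obtain c d where "x = ord_of_nat c" "y = ord_of_nat d" using ord_of_nat_range by (metis (mono_tags, lifting) imageE mem_Collect_eq)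
    then show ?thesis using Yinf_same_lower_level[OF n(1)] ne n by auto
  next
    case 2
    have "x \<in> omega_block z" "y \<in> omega_block z" using xS yS 2 unfolding mem_slice by auto
    then show ?thesis using Yinf_same_mid_level[OF zl] ne 2 by simp
  next
    case 3
    have "x = z" "y = z" using xS yS 3 gam_less_osucc unfolding mem_slice by auto
    then show ?thesis using ne by simp
  qed
qed

lemma skeleton_slice: assumes zl: "z < l"
  shows "skeleton {a. a \<le> osucc gam} (\<lambda>a. if a \<le> gam then oomega else oone) (slice gam z) (restr Yle (slice gam z)) Yinf"
  unfolding skeleton_def
proof (intro conjI ballI)
  show "LCS_poset (slice gam z) (restr Yle (slice gam z)) Yinf" by (rule LCS_poset_slice[OF zl])
  show "has_cardseq (slice gam z) {a. a \<le> osucc gam} (\<lambda>a. if a \<le> gam then oomega else oone)" by (rule has_cardseq_slice[OF zl])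
  fix a assume aL: "a \<in> {a. a \<le> osucc gam}"
  show "\<exists>Oa\<subseteq>lev_set (slice gam z) a. countable Oa \<and>
          (\<forall>s t. strict (restr Yle (slice gam z)) s t \<and> fst s = a \<longrightarrow> snd s \<in> Oa) \<and>
          (\<forall>x\<in>Oa. \<forall>y\<in>Oa. x \<noteq> y \<longrightarrow> Yinf {(a, x), (a, y)} = {}) \<and>
          (osucc a \<in> {a. a \<le> osucc gam} \<longrightarrow>
           (\<forall>t\<in>level (slice gam z) (osucc a). \<forall>s. strict (restr Yle (slice gam z)) s t \<longrightarrow>
               (\<exists>x\<in>Oa. restr Yle (slice gam z) s (a, x) \<and> strict (restr Yle (slice gam z)) (a, x) t)))"
  proof (rule exI[of _ "lev_set (slice gam z) a"], intro conjI)
    show "lev_set (slice gam z) a \<subseteq> lev_set (slice gam z) a" by simp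
    show "countable (lev_set (slice gam z) a)" by (rule countable_lev_set_slice[OF zl])
    show "\<forall>s t. strict (restr Yle (slice gam z)) s t \<and> fst s = a \<longrightarrow> snd s \<in> lev_set (slice gam z) a"
      unfolding strict_def restr_def lev_set_def by (metis mem_Collect_eq prod.collapse)
    show "\<forall>x\<in>lev_set (slice gam z) a. \<forall>y\<in>lev_set (slice gam z) a. x \<noteq> y \<longrightarrow> Yinf {(a, x), (a, y)} = {}"
      using skeleton_meet_empty_slice[OF zl] aL by blast
    show "osucc a \<in> {a. a \<le> osucc gam} \<longrightarrow>
           (\<forall>t\<in>level (slice gam z) (osucc a). \<forall>s. strict (restr Yle (slice gam z)) s t \<longrightarrow>
               (\<exists>x\<in>lev_set (slice gam z) a. restr Yle (slice gam z) s (a, x) \<and> strict (restr Yle (slice gam z)) (a, x) t))"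
      using skeleton_successor_slice[OF zl] aL by blast
  qed
qed

theorem adequate_constructed: "adequate l gam Yle Yinf"
  unfolding adequate_def
proof (intro conjI allI impI)
  show "LCS_poset (Y l gam) Yle Yinf" by (rule LCS_poset_Y)
  fix z assume zl: "z < l"
  show "closed_under Yinf (BS gam \<union> Bz gam z)" using closed_under_slice[OF zl] unfolding slice_def .
  show "skeleton {a. a \<le> osucc gam} (\<lambda>a. if a \<le> gam then oomega else oone)
          (BS gam \<union> Bz gam z) (restr Yle (BS gam \<union> Bz gam z)) Yinf"
    using skeleton_slice[OF zl] unfolding slice_def .
  show "\<forall>x\<in>Bz gam z. fst x = gam \<longrightarrow>
           strict Yle x (osucc gam, z) \<and> (\<forall>w. w \<noteq> z \<longrightarrow> \<not> strict Yle x (osucc gam, w))"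
  proof (intro ballI impI)
    fix x assume xB: "x \<in> Bz gam z" and fx: "fst x = gam"
    have "x \<noteq> (osucc gam, z)"
    proof
      assume "x = (osucc gam, z)"
      then have "fst x = osucc gam" by simp
      then show False using fx gam_ne_osucc by simp
    qed
    then have "x \<in> {(gam, x) | x. omega_mult z \<le> x \<and> x < omega_mult (osucc z)}" using xB unfolding Bz_def by blast
    then obtain y where xy: "x = (gam, y)" and y: "y \<in> omega_block z"
      unfolding omega_block_def by blast
    have yl: "y < l" using block_less[OF zl y] .
    have "Yle (emb (Mid y)) (emb (Top z))" using Yle_emb[of "Mid y" "Top z"] y yl zl by simp
    then have s1: "strict Yle x (osucc gam, z)" unfolding strict_def using xy by simp
    have s2: "\<not> strict Yle x (osucc gam, w)" if wz: "w \<noteq> z" for w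
    proof
      assume "strict Yle x (osucc gam, w)"
      then have "Yle x (osucc gam, w)" unfolding strict_def by blast
      then obtain u v where uv: "valid u" "valid v" "x = emb u" "(osucc gam, w) = emb v" "lep u v"
        using YleD by blast
      have "u = Mid y" using emb_eq_Mid[OF uv(1)] uv(3) xy by simp
      moreover have "v = Top w" using emb_eq_Top[OF uv(2)] uv(4) by simp
      ultimately have "y \<in> omega_block w" "w < l" using uv by auto
      then show False using blocks_disjoint[OF zl \<open>w < l\<close>] wz y by auto
    qed
    show "strict Yle x (osucc gam, z) \<and> (\<forall>w. w \<noteq> z \<longrightarrow> \<not> strict Yle x (osucc gam, w))"
      using s1 s2 by blast
  qed
qed

end

section \<open>Two forests\<close>

text \<open>On \<open>\<omega> \<times> \<omega>\<close> the point \<open>(n, a)\<close> with \<open>a \<noteq> 0\<close> lies directly below \<open>(n + 1, parent a)\<close>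
  and \<open>(n, 0)\<close> is the top of tree \<open>n\<close>. Every \<open>a\<close> has the infinitely many children
  \<open>Suc (prod_encode (a, k))\<close>, so every point has infinitely many points below it on each
  lower level. \<open>climb d a\<close> is the \<open>d\<close>-th ancestor of \<open>a\<close>, undefined once a top is passed.\<close>

definition parent :: "nat \<Rightarrow> nat" where "parent a = fst (prod_decode (a - 1))"

lemma parent_less: "a \<noteq> 0 \<Longrightarrow> parent a < a"
proof -
  assume "a \<noteq> 0"
  have "fst (prod_decode (a - 1)) \<le> prod_encode (prod_decode (a - 1))"
    by (metis le_prod_encode_1 prod.collapse)
  then show "parent a < a" unfolding parent_def using \<open>a \<noteq> 0\<close> by simp
qed

lemma parent_encode: "parent (Suc (prod_encode (c, k))) = c" unfolding parent_def by simp

fun climb :: "nat \<Rightarrow> nat \<Rightarrow> nat option" where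
  "climb 0 a = Some a"
| "climb (Suc d) a = (if a = 0 then None else climb d (parent a))"

function root_level :: "nat \<Rightarrow> nat \<Rightarrow> nat" where
  "root_level n a = (if a = 0 then n else root_level (Suc n) (parent a))"
  by auto
termination by (relation "measure snd") (auto simp: parent_less)

declare root_level.simps[simp del]

definition omega_tree_le :: "nat \<times> nat \<Rightarrow> nat \<times> nat \<Rightarrow> bool" where
  "omega_tree_le u v \<longleftrightarrow> fst u \<le> fst v \<and> climb (fst v - fst u) (snd u) = Some (snd v)"

definition omega_tree_root :: "nat \<times> nat \<Rightarrow> nat" where "omega_tree_root u = root_level (fst u) (snd u)"

lemma climb_add: "climb (d1 + d2) a = (case climb d1 a of None \<Rightarrow> None | Some b \<Rightarrow> climb d2 b)"
  by (induction d1 arbitrary: a) auto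

lemma climb_root_level: "climb d a = Some b \<Longrightarrow> root_level n a = root_level (n + d) b"
proof (induction d arbitrary: n a)
  case 0 then show ?case by simp
next
  case (Suc d)
  then have a0: "a \<noteq> 0" and c: "climb d (parent a) = Some b" by (auto split: if_splits)
  have "root_level n a = root_level (Suc n) (parent a)" using a0 by (simp add: root_level.simps)
  also have "\<dots> = root_level (Suc n + d) b" using Suc.IH[OF c] .
  finally show ?case by simp
qed

lemma climb_to_root: "n \<le> root_level n a \<and> climb (root_level n a - n) a = Some 0"
proof (induction n a rule: root_level.induct)
  case (1 n a)
  show ?case
  proof (cases "a = 0")
    case True then show ?thesis by (simp add: root_level.simps)
  next
    case False
    then have eq: "root_level n a = root_level (Suc n) (parent a)" by (simp add: root_level.simps)
    have IH: "Suc n \<le> root_level (Suc n) (parent a) \<and> climb (root_level (Suc n) (parent a) - Suc n) (parent a) = Some 0"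
      using 1 False by blast
    have "root_level (Suc n) (parent a) - n = Suc (root_level (Suc n) (parent a) - Suc n)" using IH[THEN conjunct1] by linarith
    then show ?thesis unfolding eq using IH False by simp
  qed
qed

lemma climb_surj: "\<exists>a. climb d a = Some b"
proof (induction d)
  case 0 then show ?case by simp
next
  case (Suc d)
  then obtain c where "climb d c = Some b" by blast
  then have "climb (Suc d) (Suc (prod_encode (c, 0))) = Some b" by (simp add: parent_encode)
  then show ?case by blast
qed

lemma climb_infinite: "infinite {a. climb (Suc d) a = Some b}"
proof -
  obtain c where c: "climb d c = Some b" using climb_surj by blast
  have "range (\<lambda>k. Suc (prod_encode (c, k))) \<subseteq> {a. climb (Suc d) a = Some b}"
    using c by (auto simp: parent_encode)
  moreover have "inj (\<lambda>k. Suc (prod_encode (c, k)))" by (simp add: inj_def)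
  ultimately show ?thesis using range_inj_infinite finite_subset by blast
qed

lemma climb_infinite': "0 < d \<Longrightarrow> infinite {a. climb d a = Some b}"
  using climb_infinite[of "d - 1" b] by simp

lemma omega_tree_refl: "omega_tree_le u u" unfolding omega_tree_le_def by simp

lemma omega_tree_antisym: "omega_tree_le u v \<Longrightarrow> omega_tree_le v u \<Longrightarrow> u = v"
  unfolding omega_tree_le_def by (simp add: prod_eq_iff)

lemma omega_tree_trans: "omega_tree_le u v \<Longrightarrow> omega_tree_le v w \<Longrightarrow> omega_tree_le u w"
proof -
  assume uv: "omega_tree_le u v" and vw: "omega_tree_le v w"
  have "fst w - fst u = (fst v - fst u) + (fst w - fst v)" using uv vw unfolding omega_tree_le_def by simp
  then show "omega_tree_le u w" using uv vw climb_add[of "fst v - fst u" "fst w - fst v" "snd u"]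
    unfolding omega_tree_le_def by simp
qed

lemma omega_tree_fst_le: "omega_tree_le u v \<Longrightarrow> fst u \<le> fst v" unfolding omega_tree_le_def by simp

lemma omega_tree_same_level: "omega_tree_le u v \<Longrightarrow> fst u = fst v \<Longrightarrow> u = v" unfolding omega_tree_le_def by (simp add: prod_eq_iff)

lemma omega_tree_root_eq: "omega_tree_le u v \<Longrightarrow> omega_tree_root u = omega_tree_root v"
  unfolding omega_tree_le_def omega_tree_root_def using climb_root_level by fastforce

lemma omega_tree_below_root: "omega_tree_le u (omega_tree_root u, 0)"
  unfolding omega_tree_le_def omega_tree_root_def using climb_to_root by simp

lemma omega_tree_root_root: "omega_tree_root (j, 0) = j" unfolding omega_tree_root_def by (simp add: root_level.simps)

lemma omega_tree_linear_above: "omega_tree_le w u \<Longrightarrow> omega_tree_le w v \<Longrightarrow> omega_tree_le u v \<or> omega_tree_le v u"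
proof -
  assume wu: "omega_tree_le w u" and wv: "omega_tree_le w v"
  have gen: "omega_tree_le u' v'" if "omega_tree_le w u'" "omega_tree_le w v'" "fst u' \<le> fst v'" for u' v'
  proof -
    have "fst v' - fst w = (fst u' - fst w) + (fst v' - fst u')" using that unfolding omega_tree_le_def by simp
    then show ?thesis using that climb_add[of "fst u' - fst w" "fst v' - fst u'" "snd w"]
      unfolding omega_tree_le_def by simp
  qed
  show ?thesis using gen[OF wu wv] gen[OF wv wu] by linarith
qed

lemma omega_tree_infinite_root_fibre: "infinite S \<Longrightarrow> infinite {a. omega_tree_root (n, a) \<in> S}"
proof -
  assume S: "infinite S"
  obtain j where j: "j \<in> S" "n < j" using S by (meson finite_nat_set_iff_bounded_le not_le)
  have "{a. climb (j - n) a = Some 0} \<subseteq> {a. omega_tree_root (n, a) \<in> S}"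
  proof
    fix a assume "a \<in> {a. climb (j - n) a = Some 0}"
    then have "root_level n a = root_level (n + (j - n)) 0" using climb_root_level by auto
    then have "omega_tree_root (n, a) = j" using j by (simp add: omega_tree_root_def root_level.simps)
    then show "a \<in> {a. omega_tree_root (n, a) \<in> S}" using j by simp
  qed
  then show ?thesis using climb_infinite'[of "j - n" 0] j finite_subset by auto
qed

lemma omega_tree_infinite_below: "n < m \<Longrightarrow> infinite {a. omega_tree_le (n, a) (m, b)}"
  unfolding omega_tree_le_def using climb_infinite'[of "m - n" b] by simp

lemma omega_tree_step_down: "omega_tree_le u (Suc m, b) \<Longrightarrow> fst u \<le> m \<Longrightarrow> \<exists>a. omega_tree_le u (m, a) \<and> omega_tree_le (m, a) (Suc m, b)"
proof -
  assume h: "omega_tree_le u (Suc m, b)" and um: "fst u \<le> m"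
  have eq: "Suc m - fst u = (m - fst u) + 1" using um by simp
  have "climb ((m - fst u) + 1) (snd u) = Some b" using h eq unfolding omega_tree_le_def by simp
  then obtain a where a: "climb (m - fst u) (snd u) = Some a" "climb 1 a = Some b"
    using climb_add[of "m - fst u" 1 "snd u"] by (auto split: option.splits)
  then show ?thesis unfolding omega_tree_le_def using um by auto
qed

lemma forest_omega_tree: "forest UNIV omega_tree_le omega_tree_root (\<lambda>j. (j, 0))"
proof
  show "\<And>u. omega_tree_le u u" by (rule omega_tree_refl)
  show "\<And>u v. omega_tree_le u v \<Longrightarrow> omega_tree_le v u \<Longrightarrow> u = v" by (rule omega_tree_antisym)
  show "\<And>u v w. omega_tree_le u v \<Longrightarrow> omega_tree_le v w \<Longrightarrow> omega_tree_le u w" by (rule omega_tree_trans)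
  show "\<And>u v. omega_tree_le u v \<Longrightarrow> fst u \<le> fst v" by (rule omega_tree_fst_le)
  show "\<And>u v. omega_tree_le u v \<Longrightarrow> fst u = fst v \<Longrightarrow> u = v" by (rule omega_tree_same_level)
  show "\<And>u v. omega_tree_le u v \<Longrightarrow> omega_tree_root u = omega_tree_root v" by (rule omega_tree_root_eq)
  show "\<And>j. fst (j, 0::nat) \<in> UNIV" by simp
  show "\<And>j. omega_tree_root (j, 0) = j" by (rule omega_tree_root_root)
  show "\<And>u. fst u \<in> UNIV \<Longrightarrow> omega_tree_le u (omega_tree_root u, 0)" by (rule omega_tree_below_root)
  show "\<And>w u v. omega_tree_le w u \<Longrightarrow> omega_tree_le w v \<Longrightarrow> omega_tree_le u v \<or> omega_tree_le v u"
    by (rule omega_tree_linear_above)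
  show "\<And>n S. n \<in> UNIV \<Longrightarrow> infinite S \<Longrightarrow> infinite {a. omega_tree_root (n, a) \<in> S}"
    by (rule omega_tree_infinite_root_fibre)
  show "\<And>m n b. m \<in> UNIV \<Longrightarrow> n < m \<Longrightarrow> infinite {a. omega_tree_le (n, a) (m, b)}"
    by (rule omega_tree_infinite_below)
  show "\<And>m u b. Suc m \<in> UNIV \<Longrightarrow> omega_tree_le u (Suc m, b) \<Longrightarrow> fst u \<le> m \<Longrightarrow>
      \<exists>a. omega_tree_le u (m, a) \<and> omega_tree_le (m, a) (Suc m, b)"
    by (rule omega_tree_step_down)
qed

lemma forest_single_level: "forest {0} (=) snd (\<lambda>j. (0, j))"
  by unfold_locales (auto simp: prod_eq_iff)

section \<open>The adequate \<open>\<omega>\<close>-poset and the adequate \<open>1\<close>-poset\<close>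

context adequate_omega1 begin

lemma oomega_less_l: "(oomega::'o) < l"
proof (rule ccontr)
  assume "\<not> oomega < l"
  then have "{y. y < l} \<subseteq> {y. y < (oomega::'o)}" by auto
  moreover have "countable (range (ord_of_nat::nat \<Rightarrow> 'o))" by simp
  ultimately show False using uncountable_below_l ord_of_nat_range countable_subset by metis
qed

lemma osucc_oomega_less_l: "osucc (oomega::'o) < l"
proof (rule ccontr)
  assume "\<not> osucc oomega < l"
  then have lo: "l \<le> osucc oomega" by simp
  have "{y. y < l} \<subseteq> insert oomega {y. y < (oomega::'o)}"
  proof
    fix y assume "y \<in> {y. y < l}"
    then have "y < osucc oomega" using lo by simp
    then have "y \<le> oomega" using less_osucc_imp_le[OF oomega_less_l] by blast
    then show "y \<in> insert oomega {y. y < (oomega::'o)}" by (auto simp: order.order_iff_strict)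
  qed
  moreover have "countable (insert oomega (range (ord_of_nat::nat \<Rightarrow> 'o)))" by simp
  ultimately show False using uncountable_below_l ord_of_nat_range countable_subset by metis
qed

lemma adequate_construction_omega:
  "adequate_construction l le i UNIV omega_tree_le omega_tree_root (\<lambda>j. (j, 0)) (oomega::'o)"
proof (intro adequate_construction.intro adequate_construction_axioms.intro)
  show "adequate_omega1 l le i" by (rule adequate_omega1_axioms)
  show "forest UNIV omega_tree_le omega_tree_root (\<lambda>j. (j, 0))" by (rule forest_omega_tree)
  show "{a. a < (oomega::'o)} = ord_of_nat ` UNIV" using ord_of_nat_range by simp
  show "oomega < osucc (oomega::'o)" using osucc_greater[OF oomega_less_l] .
  show "osucc oomega < osucc (osucc (oomega::'o))" using osucc_greater[OF osucc_oomega_less_l] .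
  show "\<And>n. n \<in> UNIV \<Longrightarrow> osucc (ord_of_nat n) = (if Suc n \<in> UNIV then ord_of_nat (Suc n) else (oomega::'o))"
    by (simp add: ord_of_nat_Suc)
qed simp_all

lemma adequate_construction_one:
  "adequate_construction l le i {0} (=) snd (\<lambda>j. (0, j)) (oone::'o)"
proof (intro adequate_construction.intro adequate_construction_axioms.intro)
  have finite_less_l: "ord_of_nat n < l" for n
    using ord_of_nat_less_oomega oomega_less_l by (rule order.strict_trans)
  have oone: "(oone::'o) = ord_of_nat 1" and osucc_oone: "osucc (oone::'o) = ord_of_nat 2"
    unfolding oone_def numeral_2_eq_2 by (simp_all add: ord_of_nat_Suc)
  show "oone < osucc (oone::'o)" unfolding oone using osucc_greater[OF finite_less_l] .
  show "osucc oone < osucc (osucc (oone::'o))" unfolding osucc_oone using osucc_greater[OF finite_less_l] .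
  show "adequate_omega1 l le i" by (rule adequate_omega1_axioms)
  show "forest {0} (=) snd (\<lambda>j. (0, j))" by (rule forest_single_level)
  show "{a. a < (oone::'o)} = ord_of_nat ` {0}" using below_oone by simp
  show "\<And>n. n \<in> {0} \<Longrightarrow> osucc (ord_of_nat n) = (if Suc n \<in> {0} then ord_of_nat (Suc n) else (oone::'o))"
    by (simp add: oone_def)
qed simp_all

lemma exists_adequate_oomega: "\<exists>le i. adequate l (oomega::'o) le i"
  using adequate_construction.adequate_constructed[OF adequate_construction_omega] by blast

lemma exists_adequate_oone: "\<exists>le i. adequate l (oone::'o) le i"
  using adequate_construction.adequate_constructed[OF adequate_construction_one] by blast

end

theorem proposition3p5:
  fixes l :: "'o::wellorder"
  assumes "uncountable_cardinal l"
    and "\<exists>x. l < x"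
    and "\<exists>le i. adequate l (oomega1 :: 'o) le i"
  shows "(\<exists>le i. adequate l (oomega :: 'o) le i) \<and> (\<exists>le i. adequate l (oone :: 'o) le i)"
proof -
  obtain le i where "adequate l (oomega1 :: 'o) le i" using assms(3) by blast
  then interpret adequate_omega1 l le i using assms(1,2) by unfold_locales
  show ?thesis using exists_adequate_oomega exists_adequate_oone by blast
qed

end
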